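(* Let $\mathcal A$ be a VS unital $*$-subalgebra of $\mathrm{Mat}(\mathbb{Z}^D,p)$ with commutant $\mathcal B$ within $\mathrm{Mat}(\mathbb{Z}^D,p)$. Then the multiplication map $\mathrm{mul}:\mathcal A\otimes\mathcal B\to\mathcal A\mathcal B$, $\sum_ia_i\otimes b_i\mapsto\sum_ia_ib_i$, is a $*$-algebra isomorphism, where $\mathcal A\mathcal B$ denotes the linear span of all products $ab$ with $a\in\mathcal A$, $b\in\mathcal B$.
   Context: For $p:\mathbb{Z}^D\to\mathbb{Z}_{>0}$ and finite $S$, $\mathrm{Mat}(S,p)=\bigotimes_{s\in S}M_{p(s)}(\mathbb{C})$ with embeddings by tensoring identities; $\mathrm{Mat}(\mathbb{Z}^D,p)$ is the union. $\mathrm{Supp}(x)$ is the smallest finite $S$ with $x\in\mathrm{Mat}(S,p)$; $S^{+\ell}$ is the set of sites at $\ell_\infty$-distance at most $\ell$ from $S$. A $*$-subalgebra $\mathcal A$ is VS if there is $\ell>0$ such that for every $a\in\mathcal A\setminus\mathbb{C}\mathbf 1$ and every $s\in\mathrm{Supp}(a)$ there is $w\in\mathcal A\cap\mathrm{Mat}(\{s\}^{+\ell},p)$ with $[a,w]\neq0$. The tensor product is the algebraic tensor product over $\mathbb{C}$. *)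

theory Defs
  imports "HOL-Analysis.Finite_Cartesian_Product"
begin

text \<open>Sites of Z^D are vectors int^'d with 'd a finite index type (so D = CARD('d)).
  A configuration assigns to each site s a basis index < p s.  An operator is
  represented by its matrix kernel on configurations (matrix units of the
  tensor product of the C^(p s)).\<close>

type_synonym 'd site = "int ^ 'd"
type_synonym 'd cfg = "'d site \<Rightarrow> nat"
type_synonym 'd op = "('d cfg \<times> 'd cfg) \<Rightarrow> complex"

definition fzero :: "'x \<Rightarrow> complex" where "fzero = (\<lambda>_. 0)"
definition fadd :: "('x \<Rightarrow> complex) \<Rightarrow> ('x \<Rightarrow> complex) \<Rightarrow> ('x \<Rightarrow> complex)"
  where "fadd f g = (\<lambda>x. f x + g x)"
definition fsub :: "('x \<Rightarrow> complex) \<Rightarrow> ('x \<Rightarrow> complex) \<Rightarrow> ('x \<Rightarrow> complex)"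
  where "fsub f g = (\<lambda>x. f x - g x)"
definition fscale :: "complex \<Rightarrow> ('x \<Rightarrow> complex) \<Rightarrow> ('x \<Rightarrow> complex)"
  where "fscale k f = (\<lambda>x. k * f x)"

definition cspan :: "('x \<Rightarrow> complex) set \<Rightarrow> ('x \<Rightarrow> complex) set" where
  "cspan V = {v. \<exists>F c. finite F \<and> F \<subseteq> V \<and> v = (\<lambda>x. \<Sum>u\<in>F. c u * u x)}"

definition cfgs :: "('d site \<Rightarrow> nat) \<Rightarrow> 'd cfg set" where
  "cfgs p = {\<sigma>. \<forall>s. \<sigma> s < p s}"

text \<open>X belongs to Mat(S,p): S finite, X acts as the identity outside S and its
  matrix elements only depend on the configurations restricted to S.\<close>
definition local_in :: "('d site \<Rightarrow> nat) \<Rightarrow> 'd site set \<Rightarrow> 'd op \<Rightarrow> bool" where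
  "local_in p S X \<longleftrightarrow> finite S \<and>
     (\<forall>\<sigma> \<tau>. X (\<sigma>, \<tau>) \<noteq> 0 \<longrightarrow> \<sigma> \<in> cfgs p \<and> \<tau> \<in> cfgs p \<and> (\<forall>s. s \<notin> S \<longrightarrow> \<sigma> s = \<tau> s)) \<and>
     (\<forall>\<sigma> \<tau> \<sigma>' \<tau>'. \<sigma> \<in> cfgs p \<longrightarrow> \<tau> \<in> cfgs p \<longrightarrow> \<sigma>' \<in> cfgs p \<longrightarrow> \<tau>' \<in> cfgs p \<longrightarrow>
        (\<forall>s\<in>S. \<sigma> s = \<sigma>' s \<and> \<tau> s = \<tau>' s) \<longrightarrow>
        (\<forall>s. s \<notin> S \<longrightarrow> \<sigma> s = \<tau> s \<and> \<sigma>' s = \<tau>' s) \<longrightarrow>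
        X (\<sigma>, \<tau>) = X (\<sigma>', \<tau>'))"

definition Mat_loc :: "('d site \<Rightarrow> nat) \<Rightarrow> 'd site set \<Rightarrow> 'd op set" where
  "Mat_loc p S = {X. local_in p S X}"

definition Mat :: "('d site \<Rightarrow> nat) \<Rightarrow> 'd op set" where
  "Mat p = (\<Union>S. Mat_loc p S)"

text \<open>Algebra operations (well-defined on Mat p: the sum is finite for local X).\<close>
definition op_mult :: "'d op \<Rightarrow> 'd op \<Rightarrow> 'd op" where
  "op_mult X Y = (\<lambda>(\<sigma>, \<tau>). \<Sum>\<rho>\<in>{\<rho>. X (\<sigma>, \<rho>) \<noteq> 0}. X (\<sigma>, \<rho>) * Y (\<rho>, \<tau>))"

definition op_star :: "'d op \<Rightarrow> 'd op" where
  "op_star X = (\<lambda>(\<sigma>, \<tau>). cnj (X (\<tau>, \<sigma>)))"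

definition op_one :: "('d site \<Rightarrow> nat) \<Rightarrow> 'd op" where
  "op_one p = (\<lambda>(\<sigma>, \<tau>). if \<sigma> = \<tau> \<and> \<sigma> \<in> cfgs p then 1 else 0)"

definition Supp :: "('d site \<Rightarrow> nat) \<Rightarrow> 'd op \<Rightarrow> 'd site set" where
  "Supp p X = (THE S. local_in p S X \<and> (\<forall>T. local_in p T X \<longrightarrow> S \<subseteq> T))"

definition linf_dist :: "'d::finite site \<Rightarrow> 'd site \<Rightarrow> int" where
  "linf_dist s t = Max (range (\<lambda>i. \<bar>s $ i - t $ i\<bar>))"

definition thicken :: "'d::finite site set \<Rightarrow> nat \<Rightarrow> 'd site set" where
  "thicken S l = {t. \<exists>s\<in>S. linf_dist s t \<le> int l}"

definition unital_star_subalg :: "('d site \<Rightarrow> nat) \<Rightarrow> 'd op set \<Rightarrow> bool" where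
  "unital_star_subalg p A \<longleftrightarrow> A \<subseteq> Mat p \<and> op_one p \<in> A \<and>
     (\<forall>x\<in>A. \<forall>y\<in>A. fadd x y \<in> A \<and> op_mult x y \<in> A) \<and>
     (\<forall>k. \<forall>x\<in>A. fscale k x \<in> A) \<and> (\<forall>x\<in>A. op_star x \<in> A)"

definition VS :: "('d::finite site \<Rightarrow> nat) \<Rightarrow> 'd op set \<Rightarrow> bool" where
  "VS p A \<longleftrightarrow> (\<exists>l::nat. l > 0 \<and>
     (\<forall>a\<in>A. a \<notin> {fscale k (op_one p) | k. True} \<longrightarrow>
        (\<forall>s\<in>Supp p a. \<exists>w\<in>A \<inter> Mat_loc p (thicken {s} l). op_mult a w \<noteq> op_mult w a)))"

definition commutant :: "('d site \<Rightarrow> nat) \<Rightarrow> 'd op set \<Rightarrow> 'd op set" where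
  "commutant p A = {b\<in>Mat p. \<forall>a\<in>A. op_mult a b = op_mult b a}"

definition prodspan :: "'d op set \<Rightarrow> 'd op set \<Rightarrow> 'd op set" where
  "prodspan A B = cspan {op_mult a b | a b. a \<in> A \<and> b \<in> B}"

text \<open>Free vector space on A \<times> B (finitely supported coefficient functions),
  modulo the bilinearity relations; elements of A \<otimes> B are the cosets.\<close>

definition free :: "'d op set \<Rightarrow> 'd op set \<Rightarrow> ('d op \<times> 'd op \<Rightarrow> complex) set" where
  "free A B = {c. finite {z. c z \<noteq> 0} \<and> {z. c z \<noteq> 0} \<subseteq> A \<times> B}"

definition etens :: "'d op \<Rightarrow> 'd op \<Rightarrow> ('d op \<times> 'd op \<Rightarrow> complex)" where
  "etens a b = (\<lambda>z. if z = (a, b) then 1 else 0)"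

definition trel :: "'d op set \<Rightarrow> 'd op set \<Rightarrow> ('d op \<times> 'd op \<Rightarrow> complex) set" where
  "trel A B = cspan (
     {fsub (etens (fadd a a') b) (fadd (etens a b) (etens a' b)) | a a' b. a \<in> A \<and> a' \<in> A \<and> b \<in> B} \<union>
     {fsub (etens a (fadd b b')) (fadd (etens a b) (etens a b')) | a b b'. a \<in> A \<and> b \<in> B \<and> b' \<in> B} \<union>
     {fsub (etens (fscale k a) b) (fscale k (etens a b)) | k a b. a \<in> A \<and> b \<in> B} \<union>
     {fsub (etens a (fscale k b)) (fscale k (etens a b)) | k a b. a \<in> A \<and> b \<in> B})"

definition tclass :: "'d op set \<Rightarrow> 'd op set \<Rightarrow> ('d op \<times> 'd op \<Rightarrow> complex) \<Rightarrow> ('d op \<times> 'd op \<Rightarrow> complex) set" where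
  "tclass A B c = {c' \<in> free A B. fsub c c' \<in> trel A B}"

definition tensor :: "'d op set \<Rightarrow> 'd op set \<Rightarrow> ('d op \<times> 'd op \<Rightarrow> complex) set set" where
  "tensor A B = tclass A B ` free A B"

definition rep :: "('d op \<times> 'd op \<Rightarrow> complex) set \<Rightarrow> ('d op \<times> 'd op \<Rightarrow> complex)" where
  "rep X = (SOME c. c \<in> X)"

text \<open>Algebra structure on the free space: (a\<otimes>b)(a'\<otimes>b') = aa'\<otimes>bb', (a\<otimes>b)* = a*\<otimes>b*.\<close>
definition fconv :: "('d op \<times> 'd op \<Rightarrow> complex) \<Rightarrow> ('d op \<times> 'd op \<Rightarrow> complex) \<Rightarrow> ('d op \<times> 'd op \<Rightarrow> complex)" where
  "fconv c d = (\<lambda>z. \<Sum>(x, y)\<in>{x. c x \<noteq> 0} \<times> {y. d y \<noteq> 0}.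
      if (op_mult (fst x) (fst y), op_mult (snd x) (snd y)) = z then c x * d y else 0)"

definition fstar :: "('d op \<times> 'd op \<Rightarrow> complex) \<Rightarrow> ('d op \<times> 'd op \<Rightarrow> complex)" where
  "fstar c = (\<lambda>z. \<Sum>x\<in>{x. c x \<noteq> 0}.
      if (op_star (fst x), op_star (snd x)) = z then cnj (c x) else 0)"

definition tadd where "tadd A B X Y = tclass A B (fadd (rep X) (rep Y))"
definition tscale where "tscale A B k X = tclass A B (fscale k (rep X))"
definition tmult where "tmult A B X Y = tclass A B (fconv (rep X) (rep Y))"
definition tstar where "tstar A B X = tclass A B (fstar (rep X))"
definition tone where "tone p A B = tclass A B (etens (op_one p) (op_one p))"

definition mulmap :: "('d op \<times> 'd op \<Rightarrow> complex) set \<Rightarrow> 'd op" where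
  "mulmap X = (let c = rep X in
     (\<lambda>x. \<Sum>z\<in>{z. c z \<noteq> 0}. c z * op_mult (fst z) (snd z) x))"

end

(*
  Linearity, multiplicativity and compatibility with the involution of the multiplication map
  are formal consequences of A and B commuting elementwise, and its image is AB by definition.
  The content is injectivity, i.e. that a relation sum_v a_v v = 0 with a_v in A and linearly
  independent v in B forces all a_v = 0.

  Localise all a_v and v in a finite box S and thicken it to T = S^{+l}, l the VS range. Choose r
  in the span of the v that is Hilbert-Schmidt dual on Mat(T) to a fixed v_0, and apply to
  sum_v a_v v r^* the orthogonal projection onto A intersect Mat(T) followed by the one onto
  Mat(S). Both are conditional expectations, hence module maps over A intersect Mat(S). The first
  sends v r^*, an element of B, into the relative commutant of A intersect Mat(T), whose elements
  the VS property confines to the sites within distance l of the complement of T, hence away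
  from S; the second then yields a scalar, which by trace preservation is <v, r>/<1, 1>.
  So sum_v <v, r> a_v = 0, i.e. a_{v_0} = 0.
*)

theory Submission
  imports Defs "HOL-Library.Function_Algebras"
begin

lemma fadd_eq: "fadd f g = f + g"
  by (simp add: fadd_def fun_eq_iff)

lemma fsub_eq: "fsub f g = f - g"
  by (simp add: fsub_def fun_eq_iff)

interpretation cfun: vector_space "fscale :: complex \<Rightarrow> ('x \<Rightarrow> complex) \<Rightarrow> ('x \<Rightarrow> complex)"
  by unfold_locales (auto simp: fscale_def fun_eq_iff algebra_simps)

lemma fscale_apply [simp]: "fscale k f x = k * f x"
  by (simp add: fscale_def)

lemma sum_fun_apply: "(\<Sum>i\<in>I. f i) x = (\<Sum>i\<in>I. f i x)"
  by (induction I rule: infinite_finite_induct) auto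

lemma sum_eq_single:
  assumes "finite F" "\<mu> \<in> F" "\<And>m. m \<in> F \<Longrightarrow> m \<noteq> \<mu> \<Longrightarrow> f m = 0"
  shows "sum f F = f \<mu>"
  using assms by (simp add: sum.remove sum.neutral)

section \<open>Local operators\<close>

definition cfg_fiber :: "('d site \<Rightarrow> nat) \<Rightarrow> 'd site set \<Rightarrow> 'd cfg \<Rightarrow> 'd cfg set" where
  "cfg_fiber p S \<sigma> = {\<rho>\<in>cfgs p. \<forall>s. s \<notin> S \<longrightarrow> \<rho> s = \<sigma> s}"

lemma finite_cfg_fiber:
  assumes "finite S"
  shows "finite (cfg_fiber p S \<sigma>)"
proof -
  have "cfg_fiber p S \<sigma> \<subseteq> (\<lambda>f s. if s \<in> S then f s else \<sigma> s) ` (PiE S (\<lambda>s. {..<p s}))"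
  proof
    fix \<rho> assume \<rho>: "\<rho> \<in> cfg_fiber p S \<sigma>"
    then have "\<rho> = (\<lambda>s. if s \<in> S then restrict \<rho> S s else \<sigma> s)"
      by (auto simp: cfg_fiber_def fun_eq_iff)
    moreover have "restrict \<rho> S \<in> PiE S (\<lambda>s. {..<p s})"
      using \<rho> by (auto simp: cfg_fiber_def cfgs_def)
    ultimately show "\<rho> \<in> (\<lambda>f s. if s \<in> S then f s else \<sigma> s) ` (PiE S (\<lambda>s. {..<p s}))"
      by blast
  qed
  then show ?thesis
    using assms by (meson finite_PiE finite_lessThan finite_surj)
qed

lemma cfg_fiber_eq: "\<mu> \<in> cfg_fiber p S \<sigma> \<Longrightarrow> cfg_fiber p S \<mu> = cfg_fiber p S \<sigma>"
  by (auto simp: cfg_fiber_def)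

lemma local_in_finite: "local_in p S X \<Longrightarrow> finite S"
  by (simp add: local_in_def)

lemma local_in_nonzeroD:
  "local_in p S X \<Longrightarrow> X (\<sigma>, \<tau>) \<noteq> 0 \<Longrightarrow> \<sigma> \<in> cfgs p \<and> \<tau> \<in> cfgs p \<and> (\<forall>s. s \<notin> S \<longrightarrow> \<sigma> s = \<tau> s)"
  unfolding local_in_def by blast

lemma local_in_eqD:
  "local_in p S X \<Longrightarrow> \<sigma> \<in> cfgs p \<Longrightarrow> \<tau> \<in> cfgs p \<Longrightarrow> \<sigma>' \<in> cfgs p \<Longrightarrow> \<tau>' \<in> cfgs p \<Longrightarrow>
   (\<And>s. s \<in> S \<Longrightarrow> \<sigma> s = \<sigma>' s \<and> \<tau> s = \<tau>' s) \<Longrightarrow> (\<And>s. s \<notin> S \<Longrightarrow> \<sigma> s = \<tau> s \<and> \<sigma>' s = \<tau>' s) \<Longrightarrow>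
   X (\<sigma>, \<tau>) = X (\<sigma>', \<tau>')"
  unfolding local_in_def by blast

lemma local_inI:
  assumes "finite S"
    and "\<And>\<sigma> \<tau>. X (\<sigma>, \<tau>) \<noteq> 0 \<Longrightarrow> \<sigma> \<in> cfgs p \<and> \<tau> \<in> cfgs p \<and> (\<forall>s. s \<notin> S \<longrightarrow> \<sigma> s = \<tau> s)"
    and "\<And>\<sigma> \<tau> \<sigma>' \<tau>'. \<sigma> \<in> cfgs p \<Longrightarrow> \<tau> \<in> cfgs p \<Longrightarrow> \<sigma>' \<in> cfgs p \<Longrightarrow> \<tau>' \<in> cfgs p \<Longrightarrow>
        (\<forall>s\<in>S. \<sigma> s = \<sigma>' s \<and> \<tau> s = \<tau>' s) \<Longrightarrow>
        (\<forall>s. s \<notin> S \<longrightarrow> \<sigma> s = \<tau> s \<and> \<sigma>' s = \<tau>' s) \<Longrightarrow> X (\<sigma>, \<tau>) = X (\<sigma>', \<tau>')"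
  shows "local_in p S X"
  unfolding local_in_def using assms by blast

lemma local_in_nonzero_fiber: "local_in p S X \<Longrightarrow> X (\<sigma>, \<rho>) \<noteq> 0 \<Longrightarrow> \<rho> \<in> cfg_fiber p S \<sigma>"
  by (auto simp: cfg_fiber_def dest: local_in_nonzeroD)

lemma local_in_outside_cfgs: "local_in p S X \<Longrightarrow> \<sigma> \<notin> cfgs p \<or> \<tau> \<notin> cfgs p \<Longrightarrow> X (\<sigma>, \<tau>) = 0"
  by (auto dest: local_in_nonzeroD)

lemma mem_Mat_loc_iff: "X \<in> Mat_loc p S \<longleftrightarrow> local_in p S X"
  by (simp add: Mat_loc_def)

lemma mem_Mat_iff: "X \<in> Mat p \<longleftrightarrow> (\<exists>S. local_in p S X)"
  by (auto simp: Mat_def Mat_loc_def)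

lemma op_mult_eq_sum:
  "finite F \<Longrightarrow> {\<rho>. X (\<sigma>, \<rho>) \<noteq> 0} \<subseteq> F \<Longrightarrow> op_mult X Y (\<sigma>, \<tau>) = (\<Sum>\<rho>\<in>F. X (\<sigma>, \<rho>) * Y (\<rho>, \<tau>))"
  unfolding op_mult_def by (simp, rule sum.mono_neutral_left) auto

lemma op_mult_fiber:
  "local_in p S X \<Longrightarrow> op_mult X Y (\<sigma>, \<tau>) = (\<Sum>\<rho>\<in>cfg_fiber p S \<sigma>. X (\<sigma>, \<rho>) * Y (\<rho>, \<tau>))"
  by (rule op_mult_eq_sum) (auto simp: finite_cfg_fiber local_in_finite local_in_nonzero_fiber)

lemma local_in_mono:
  assumes X: "local_in p S X" and sub: "S \<subseteq> S'" and fin: "finite S'"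
  shows "local_in p S' X"
proof (rule local_inI)
  fix \<sigma> \<tau> assume "X (\<sigma>, \<tau>) \<noteq> 0"
  then show "\<sigma> \<in> cfgs p \<and> \<tau> \<in> cfgs p \<and> (\<forall>s. s \<notin> S' \<longrightarrow> \<sigma> s = \<tau> s)"
    using local_in_nonzeroD[OF X] sub by blast
next
  fix \<sigma> \<tau> \<sigma>' \<tau>'
  assume c: "\<sigma> \<in> cfgs p" "\<tau> \<in> cfgs p" "\<sigma>' \<in> cfgs p" "\<tau>' \<in> cfgs p"
    and agree: "\<forall>s\<in>S'. \<sigma> s = \<sigma>' s \<and> \<tau> s = \<tau>' s"
    and outside: "\<forall>s. s \<notin> S' \<longrightarrow> \<sigma> s = \<tau> s \<and> \<sigma>' s = \<tau>' s"
  show "X (\<sigma>, \<tau>) = X (\<sigma>', \<tau>')"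
  proof (cases "\<exists>s\<in>S' - S. \<sigma> s \<noteq> \<tau> s")
    case True
    then obtain s where s: "s \<in> S'" "s \<notin> S" "\<sigma> s \<noteq> \<tau> s" by blast
    have "X (\<sigma>, \<tau>) = 0" using local_in_nonzeroD[OF X, of \<sigma> \<tau>] s by blast
    moreover have "X (\<sigma>', \<tau>') = 0" using local_in_nonzeroD[OF X, of \<sigma>' \<tau>'] s agree by force
    ultimately show ?thesis by simp
  next
    case False
    show ?thesis
      by (rule local_in_eqD[OF X c]) (use agree outside sub False in force)+
  qed
qed (fact fin)

lemma local_in_Int:
  assumes S: "local_in p S X" and T: "local_in p T X"
  shows "local_in p (S \<inter> T) X"
proof (rule local_inI)
  show "finite (S \<inter> T)" using S local_in_finite by auto
next
  fix \<sigma> \<tau> \<sigma>' \<tau>'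
  assume c: "\<sigma> \<in> cfgs p" "\<tau> \<in> cfgs p" "\<sigma>' \<in> cfgs p" "\<tau>' \<in> cfgs p"
    and agree: "\<forall>s\<in>S \<inter> T. \<sigma> s = \<sigma>' s \<and> \<tau> s = \<tau>' s"
    and outside: "\<forall>s. s \<notin> S \<inter> T \<longrightarrow> \<sigma> s = \<tau> s \<and> \<sigma>' s = \<tau>' s"
  define \<mu> where "\<mu> = (\<lambda>s. if s \<in> T then \<sigma> s else \<sigma>' s)"
  define \<nu> where "\<nu> = (\<lambda>s. if s \<in> T then \<tau> s else \<tau>' s)"
  have c': "\<mu> \<in> cfgs p" "\<nu> \<in> cfgs p" using c by (auto simp: \<mu>_def \<nu>_def cfgs_def)
  have "X (\<sigma>, \<tau>) = X (\<mu>, \<nu>)"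
    by (rule local_in_eqD[OF T c(1,2) c']) (use outside in \<open>auto simp: \<mu>_def \<nu>_def\<close>)
  also have "\<dots> = X (\<sigma>', \<tau>')"
    by (rule local_in_eqD[OF S c' c(3,4)]) (use outside agree in \<open>auto simp: \<mu>_def \<nu>_def\<close>)
  finally show "X (\<sigma>, \<tau>) = X (\<sigma>', \<tau>')" .
qed (use local_in_nonzeroD[OF S] local_in_nonzeroD[OF T] in blast)

text \<open>The intersection property makes the support of a local operator well defined.\<close>

lemma Supp_minimal:
  assumes "X \<in> Mat p"
  shows "local_in p (Supp p X) X" and "local_in p T X \<Longrightarrow> Supp p X \<subseteq> T"
proof -
  obtain S0 where S0: "local_in p S0 X" using assms mem_Mat_iff by blast
  define n where "n = (LEAST n. \<exists>S. local_in p S X \<and> card S = n)"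
  have "\<exists>S. local_in p S X \<and> card S = n"
    unfolding n_def by (rule LeastI[of _ "card S0"]) (use S0 in blast)
  then obtain S where S: "local_in p S X" and "card S = n" by blast
  have least: "card S \<le> card S'" if "local_in p S' X" for S'
    unfolding \<open>card S = n\<close> n_def by (rule Least_le) (use that in blast)
  have sub: "S \<subseteq> T" if "local_in p T X" for T
  proof -
    have "card S \<le> card (S \<inter> T)" by (rule least[OF local_in_Int[OF S that]])
    then have "S \<inter> T = S"
      using local_in_finite[OF S] by (metis card_subset_eq inf_le1 le_antisym card_mono)
    then show ?thesis by blast
  qed
  have "Supp p X = S"
    unfolding Supp_def by (rule the_equality) (use S sub in blast)+
  then show "local_in p (Supp p X) X" and "local_in p T X \<Longrightarrow> Supp p X \<subseteq> T"
    using S sub by auto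
qed

lemma local_in_zero: "finite S \<Longrightarrow> local_in p S 0"
  by (simp add: local_in_def)

lemma local_in_one_empty: "local_in p {} (op_one p)"
proof (rule local_inI)
  fix \<sigma> \<tau> :: "'a cfg" assume "op_one p (\<sigma>, \<tau>) \<noteq> 0"
  then show "\<sigma> \<in> cfgs p \<and> \<tau> \<in> cfgs p \<and> (\<forall>s. s \<notin> {} \<longrightarrow> \<sigma> s = \<tau> s)"
    by (auto simp: op_one_def split: if_splits)
next
  fix \<sigma> \<tau> \<sigma>' \<tau>' :: "'a cfg"
  assume "\<sigma> \<in> cfgs p" "\<sigma>' \<in> cfgs p" "\<forall>s. s \<notin> {} \<longrightarrow> \<sigma> s = \<tau> s \<and> \<sigma>' s = \<tau>' s"
  moreover from this have "\<sigma> = \<tau>" "\<sigma>' = \<tau>'" by (auto simp: fun_eq_iff)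
  ultimately show "op_one p (\<sigma>, \<tau>) = op_one p (\<sigma>', \<tau>')" by (simp add: op_one_def)
qed simp

lemma local_in_one: "finite S \<Longrightarrow> local_in p S (op_one p)"
  using local_in_mono[OF local_in_one_empty] by blast

lemma local_in_add:
  assumes X: "local_in p S X" and Y: "local_in p S Y"
  shows "local_in p S (X + Y)"
proof (rule local_inI)
  fix \<sigma> \<tau> assume "(X + Y) (\<sigma>, \<tau>) \<noteq> 0"
  then have "X (\<sigma>, \<tau>) \<noteq> 0 \<or> Y (\<sigma>, \<tau>) \<noteq> 0" by auto
  then show "\<sigma> \<in> cfgs p \<and> \<tau> \<in> cfgs p \<and> (\<forall>s. s \<notin> S \<longrightarrow> \<sigma> s = \<tau> s)"
    using local_in_nonzeroD[OF X] local_in_nonzeroD[OF Y] by blast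
next
  fix \<sigma> \<tau> \<sigma>' \<tau>'
  assume "\<sigma> \<in> cfgs p" "\<tau> \<in> cfgs p" "\<sigma>' \<in> cfgs p" "\<tau>' \<in> cfgs p"
    "\<forall>s\<in>S. \<sigma> s = \<sigma>' s \<and> \<tau> s = \<tau>' s" "\<forall>s. s \<notin> S \<longrightarrow> \<sigma> s = \<tau> s \<and> \<sigma>' s = \<tau>' s"
  then have "X (\<sigma>, \<tau>) = X (\<sigma>', \<tau>')" "Y (\<sigma>, \<tau>) = Y (\<sigma>', \<tau>')"
    by (intro local_in_eqD[OF X] local_in_eqD[OF Y]; auto)+
  then show "(X + Y) (\<sigma>, \<tau>) = (X + Y) (\<sigma>', \<tau>')" by simp
qed (rule local_in_finite[OF X])

lemma local_in_scale:
  assumes X: "local_in p S X"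
  shows "local_in p S (fscale k X)"
proof (rule local_inI)
  fix \<sigma> \<tau> assume "fscale k X (\<sigma>, \<tau>) \<noteq> 0"
  then show "\<sigma> \<in> cfgs p \<and> \<tau> \<in> cfgs p \<and> (\<forall>s. s \<notin> S \<longrightarrow> \<sigma> s = \<tau> s)"
    using local_in_nonzeroD[OF X] by auto
next
  fix \<sigma> \<tau> \<sigma>' \<tau>'
  assume "\<sigma> \<in> cfgs p" "\<tau> \<in> cfgs p" "\<sigma>' \<in> cfgs p" "\<tau>' \<in> cfgs p"
    "\<forall>s\<in>S. \<sigma> s = \<sigma>' s \<and> \<tau> s = \<tau>' s" "\<forall>s. s \<notin> S \<longrightarrow> \<sigma> s = \<tau> s \<and> \<sigma>' s = \<tau>' s"
  then have "X (\<sigma>, \<tau>) = X (\<sigma>', \<tau>')" by (intro local_in_eqD[OF X]) auto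
  then show "fscale k X (\<sigma>, \<tau>) = fscale k X (\<sigma>', \<tau>')" by simp
qed (rule local_in_finite[OF X])

lemma local_in_diff:
  assumes "local_in p S X" "local_in p S Y"
  shows "local_in p S (X - Y)"
proof -
  have "X - Y = X + fscale (-1) Y" by (simp add: fun_eq_iff)
  then show ?thesis by (simp only:) (intro local_in_add local_in_scale assms)
qed

lemma local_in_sum:
  "finite I \<Longrightarrow> finite S \<Longrightarrow> (\<And>i. i \<in> I \<Longrightarrow> local_in p S (f i)) \<Longrightarrow> local_in p S (\<Sum>i\<in>I. f i)"
  by (induction I rule: finite_induct) (auto simp: local_in_add local_in_zero)

lemma local_in_star:
  assumes X: "local_in p S X"
  shows "local_in p S (op_star X)"
proof (rule local_inI)
  fix \<sigma> \<tau> assume "op_star X (\<sigma>, \<tau>) \<noteq> 0"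
  then show "\<sigma> \<in> cfgs p \<and> \<tau> \<in> cfgs p \<and> (\<forall>s. s \<notin> S \<longrightarrow> \<sigma> s = \<tau> s)"
    using local_in_nonzeroD[OF X, of \<tau> \<sigma>] by (auto simp: op_star_def)
next
  fix \<sigma> \<tau> \<sigma>' \<tau>'
  assume "\<sigma> \<in> cfgs p" "\<tau> \<in> cfgs p" "\<sigma>' \<in> cfgs p" "\<tau>' \<in> cfgs p"
    "\<forall>s\<in>S. \<sigma> s = \<sigma>' s \<and> \<tau> s = \<tau>' s" "\<forall>s. s \<notin> S \<longrightarrow> \<sigma> s = \<tau> s \<and> \<sigma>' s = \<tau>' s"
  then have "X (\<tau>, \<sigma>) = X (\<tau>', \<sigma>')" by (intro local_in_eqD[OF X]) auto
  then show "op_star X (\<sigma>, \<tau>) = op_star X (\<sigma>', \<tau>')" by (simp add: op_star_def)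
qed (rule local_in_finite[OF X])

text \<open>Matrix elements of a product depend only on the sites in S because the summation over
  the fibre of \<open>\<sigma>\<close> can be transported to the fibre of \<open>\<sigma>'\<close> by overwriting sites outside S.\<close>

lemma local_in_mult:
  assumes X: "local_in p S X" and Y: "local_in p S Y"
  shows "local_in p S (op_mult X Y)"
proof (rule local_inI)
  fix \<sigma> \<tau> assume "op_mult X Y (\<sigma>, \<tau>) \<noteq> 0"
  then obtain \<rho> where "\<rho> \<in> cfg_fiber p S \<sigma>" "X (\<sigma>, \<rho>) * Y (\<rho>, \<tau>) \<noteq> 0"
    unfolding op_mult_fiber[OF X] by (rule sum.not_neutral_contains_not_neutral)
  then show "\<sigma> \<in> cfgs p \<and> \<tau> \<in> cfgs p \<and> (\<forall>s. s \<notin> S \<longrightarrow> \<sigma> s = \<tau> s)"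
    using local_in_nonzeroD[OF X, of \<sigma> \<rho>] local_in_nonzeroD[OF Y, of \<rho> \<tau>] by auto
next
  fix \<sigma> \<tau> \<sigma>' \<tau>'
  assume c: "\<sigma> \<in> cfgs p" "\<tau> \<in> cfgs p" "\<sigma>' \<in> cfgs p" "\<tau>' \<in> cfgs p"
    and agree: "\<forall>s\<in>S. \<sigma> s = \<sigma>' s \<and> \<tau> s = \<tau>' s"
    and outside: "\<forall>s. s \<notin> S \<longrightarrow> \<sigma> s = \<tau> s \<and> \<sigma>' s = \<tau>' s"
  define h where "h = (\<lambda>\<rho>::'a cfg. \<lambda>s. if s \<in> S then \<rho> s else \<sigma>' s)"
  define h' where "h' = (\<lambda>\<rho>::'a cfg. \<lambda>s. if s \<in> S then \<rho> s else \<sigma> s)"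
  have "(\<Sum>\<rho>\<in>cfg_fiber p S \<sigma>. X (\<sigma>, \<rho>) * Y (\<rho>, \<tau>)) = (\<Sum>\<rho>\<in>cfg_fiber p S \<sigma>'. X (\<sigma>', \<rho>) * Y (\<rho>, \<tau>'))"
  proof (rule sum.reindex_bij_witness[where i=h' and j=h])
    fix \<rho> assume "\<rho> \<in> cfg_fiber p S \<sigma>'"
    then show "h (h' \<rho>) = \<rho>" "h' \<rho> \<in> cfg_fiber p S \<sigma>"
      using c by (auto simp: h_def h'_def cfg_fiber_def cfgs_def fun_eq_iff)
  next
    fix \<rho> assume \<rho>: "\<rho> \<in> cfg_fiber p S \<sigma>"
    then show "h' (h \<rho>) = \<rho>" by (auto simp: h_def h'_def cfg_fiber_def fun_eq_iff)
    have h\<rho>: "h \<rho> \<in> cfgs p" using \<rho> c by (auto simp: h_def cfg_fiber_def cfgs_def)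
    then show "h \<rho> \<in> cfg_fiber p S \<sigma>'" by (auto simp: h_def cfg_fiber_def)
    have \<rho>': "\<rho> \<in> cfgs p" "\<forall>s. s \<notin> S \<longrightarrow> \<rho> s = \<sigma> s" using \<rho> by (auto simp: cfg_fiber_def)
    have "X (\<sigma>, \<rho>) = X (\<sigma>', h \<rho>)"
      by (rule local_in_eqD[OF X c(1) \<rho>'(1) c(3) h\<rho>]) (use agree \<rho>' in \<open>auto simp: h_def\<close>)
    moreover have "Y (\<rho>, \<tau>) = Y (h \<rho>, \<tau>')"
      by (rule local_in_eqD[OF Y \<rho>'(1) c(2) h\<rho> c(4)]) (use agree outside \<rho>' in \<open>auto simp: h_def\<close>)
    ultimately show "X (\<sigma>', h \<rho>) * Y (h \<rho>, \<tau>') = X (\<sigma>, \<rho>) * Y (\<rho>, \<tau>)" by simp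
  qed
  then show "op_mult X Y (\<sigma>, \<tau>) = op_mult X Y (\<sigma>', \<tau>')"
    by (simp add: op_mult_fiber[OF X])
qed (rule local_in_finite[OF X])

lemma Mat_common_local:
  assumes "finite I" "\<And>i. i \<in> I \<Longrightarrow> f i \<in> Mat p"
  obtains S where "finite S" "\<And>i. i \<in> I \<Longrightarrow> local_in p S (f i)"
proof -
  have "\<exists>S. finite S \<and> (\<forall>i\<in>I. local_in p S (f i))"
    using assms
  proof (induction I rule: finite_induct)
    case empty
    show ?case by (intro exI[of _ "{}"]) simp
  next
    case (insert x F)
    then obtain S where S: "finite S" "\<forall>i\<in>F. local_in p S (f i)" by auto
    obtain T where T: "local_in p T (f x)" using insert mem_Mat_iff by blast
    have "finite (S \<union> T)" using S T local_in_finite by auto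
    then show ?case
      using S T local_in_mono[of p S _ "S \<union> T"] local_in_mono[OF T, of "S \<union> T"]
      by (intro exI[of _ "S \<union> T"]) auto
  qed
  then show ?thesis using that by blast
qed

lemma Mat_common_local2:
  assumes "X \<in> Mat p" "Y \<in> Mat p"
  obtains S where "local_in p S X" "local_in p S Y"
proof -
  obtain S where "finite S" "\<And>i. i \<in> {X, Y} \<Longrightarrow> local_in p S (id i)"
    by (rule Mat_common_local[of "{X, Y}" id p]) (use assms in auto)
  then have "local_in p S X" "local_in p S Y" by auto
  then show ?thesis by (rule that)
qed

lemma op_mult_add_left:
  assumes "local_in p S X" "local_in p S X'"
  shows "op_mult (X + X') Y = op_mult X Y + op_mult X' Y"
  using local_in_add[OF assms]
  by (simp add: fun_eq_iff op_mult_fiber[OF assms(1)] op_mult_fiber[OF assms(2)] op_mult_fiber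
      sum.distrib algebra_simps)

lemma op_mult_add_right: "op_mult X (Y + Y') = op_mult X Y + op_mult X Y'"
  by (simp add: fun_eq_iff op_mult_def sum.distrib algebra_simps)

lemma op_mult_scale_left: "local_in p S X \<Longrightarrow> op_mult (fscale k X) Y = fscale k (op_mult X Y)"
  using local_in_scale[of p S X k]
  by (simp add: fun_eq_iff op_mult_fiber sum_distrib_left algebra_simps)

lemma op_mult_scale_right: "op_mult X (fscale k Y) = fscale k (op_mult X Y)"
  by (simp add: fun_eq_iff op_mult_def sum_distrib_left algebra_simps)

lemma op_mult_zero_left [simp]: "op_mult 0 Y = 0"
  by (simp add: fun_eq_iff op_mult_def)

lemma op_mult_zero_right [simp]: "op_mult X 0 = 0"
  by (simp add: fun_eq_iff op_mult_def)

lemma op_mult_diff_left: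
  assumes "local_in p S X" "local_in p S X'"
  shows "op_mult (X - X') Y = op_mult X Y - op_mult X' Y"
proof -
  have "X - X' = X + fscale (-1) X'" "op_mult X Y - op_mult X' Y = op_mult X Y + fscale (-1) (op_mult X' Y)"
    by (simp_all add: fun_eq_iff)
  then show ?thesis
    using assms by (simp only: op_mult_add_left[OF assms(1) local_in_scale] op_mult_scale_left)
qed

lemma op_mult_diff_right: "op_mult X (Y - Y') = op_mult X Y - op_mult X Y'"
  by (simp add: fun_eq_iff op_mult_def sum_subtractf algebra_simps)

lemma op_mult_sum_left:
  assumes "finite I" "finite S" "\<And>i. i \<in> I \<Longrightarrow> local_in p S (f i)"
  shows "op_mult (\<Sum>i\<in>I. f i) Y = (\<Sum>i\<in>I. op_mult (f i) Y)"
  using assms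
proof (induction I rule: finite_induct)
  case empty
  show ?case by (simp only: sum.empty op_mult_zero_left)
next
  case (insert x F)
  then have "local_in p S (f x)" "local_in p S (\<Sum>i\<in>F. f i)" by (auto intro: local_in_sum)
  moreover have "op_mult (\<Sum>i\<in>F. f i) Y = (\<Sum>i\<in>F. op_mult (f i) Y)"
    using insert by blast
  ultimately show ?case
    by (simp only: sum.insert[OF insert(1,2)] op_mult_add_left)
qed

lemma op_mult_sum_right: "op_mult X (\<Sum>i\<in>I. f i) = (\<Sum>i\<in>I. op_mult X (f i))"
proof (induction I rule: infinite_finite_induct)
  case (infinite I)
  then show ?case by (simp only: sum.infinite[OF infinite] op_mult_zero_right)
next
  case empty
  then show ?case by (simp only: sum.empty op_mult_zero_right)
next
  case (insert x F)
  then show ?case by (simp only: sum.insert[OF insert(1,2)] op_mult_add_right)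
qed

lemma op_mult_assoc:
  assumes X: "local_in p S X" and Y: "local_in p S Y"
  shows "op_mult (op_mult X Y) Z = op_mult X (op_mult Y Z)"
proof (rule ext, clarify)
  fix \<sigma> \<tau>
  let ?F = "cfg_fiber p S \<sigma>"
  have "op_mult (op_mult X Y) Z (\<sigma>, \<tau>) = (\<Sum>\<rho>\<in>?F. (\<Sum>\<mu>\<in>?F. X (\<sigma>, \<mu>) * Y (\<mu>, \<rho>)) * Z (\<rho>, \<tau>))"
    by (simp add: op_mult_fiber[OF local_in_mult[OF X Y]] op_mult_fiber[OF X])
  also have "\<dots> = (\<Sum>\<mu>\<in>?F. \<Sum>\<rho>\<in>?F. X (\<sigma>, \<mu>) * (Y (\<mu>, \<rho>) * Z (\<rho>, \<tau>)))"
    by (simp add: sum_distrib_right mult.assoc) (rule sum.swap)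
  also have "\<dots> = (\<Sum>\<mu>\<in>?F. X (\<sigma>, \<mu>) * (\<Sum>\<rho>\<in>cfg_fiber p S \<mu>. Y (\<mu>, \<rho>) * Z (\<rho>, \<tau>)))"
    by (intro sum.cong refl) (simp add: cfg_fiber_eq sum_distrib_left)
  also have "\<dots> = op_mult X (op_mult Y Z) (\<sigma>, \<tau>)"
    by (simp add: op_mult_fiber[OF X] op_mult_fiber[OF Y])
  finally show "op_mult (op_mult X Y) Z (\<sigma>, \<tau>) = op_mult X (op_mult Y Z) (\<sigma>, \<tau>)" .
qed

lemma op_one_mult:
  assumes X: "local_in p S X"
  shows "op_mult (op_one p) X = X"
proof (rule ext, clarify)
  fix \<sigma> \<tau>
  have "op_mult (op_one p) X (\<sigma>, \<tau>) = (\<Sum>\<rho>\<in>{\<sigma>}. op_one p (\<sigma>, \<rho>) * X (\<rho>, \<tau>))"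
    by (rule op_mult_eq_sum) (auto simp: op_one_def split: if_splits)
  also have "\<dots> = X (\<sigma>, \<tau>)"
    using local_in_outside_cfgs[OF X, of \<sigma> \<tau>] by (auto simp: op_one_def)
  finally show "op_mult (op_one p) X (\<sigma>, \<tau>) = X (\<sigma>, \<tau>)" .
qed

lemma op_mult_one:
  assumes X: "local_in p S X"
  shows "op_mult X (op_one p) = X"
proof (rule ext, clarify)
  fix \<sigma> \<tau>
  have "op_mult X (op_one p) (\<sigma>, \<tau>) = (\<Sum>\<rho>\<in>cfg_fiber p S \<sigma>. if \<rho> = \<tau> then X (\<sigma>, \<tau>) else 0)"
    unfolding op_mult_fiber[OF X] by (intro sum.cong refl) (auto simp: op_one_def cfg_fiber_def)
  also have "\<dots> = X (\<sigma>, \<tau>)"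
    using local_in_nonzero_fiber[OF X, of \<sigma> \<tau>] finite_cfg_fiber[OF local_in_finite[OF X]]
    by (auto simp: sum.delta)
  finally show "op_mult X (op_one p) (\<sigma>, \<tau>) = X (\<sigma>, \<tau>)" .
qed

lemma op_star_star [simp]: "op_star (op_star X) = X"
  by (simp add: op_star_def fun_eq_iff)

lemma op_star_add: "op_star (X + Y) = op_star X + op_star Y"
  by (simp add: op_star_def fun_eq_iff)

lemma op_star_scale: "op_star (fscale k X) = fscale (cnj k) (op_star X)"
  by (simp add: op_star_def fun_eq_iff)

lemma op_star_zero [simp]: "op_star 0 = 0"
  by (simp add: op_star_def fun_eq_iff)

lemma op_star_sum: "op_star (\<Sum>i\<in>I. f i) = (\<Sum>i\<in>I. op_star (f i))"
proof (induction I rule: infinite_finite_induct)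
  case (infinite I)
  then show ?case by (simp only: sum.infinite[OF infinite] op_star_zero)
next
  case empty
  then show ?case by (simp only: sum.empty op_star_zero)
next
  case (insert x F)
  then show ?case by (simp only: sum.insert[OF insert(1,2)] op_star_add)
qed

lemma op_star_mult:
  assumes X: "local_in p S X" and Y: "local_in p S Y"
  shows "op_star (op_mult X Y) = op_mult (op_star Y) (op_star X)"
proof (rule ext, clarify)
  fix \<sigma> \<tau>
  let ?U = "cfg_fiber p S \<sigma> \<union> cfg_fiber p S \<tau>"
  have U: "finite ?U" using finite_cfg_fiber[OF local_in_finite[OF X]] by auto
  have "op_mult X Y (\<tau>, \<sigma>) = (\<Sum>\<rho>\<in>?U. X (\<tau>, \<rho>) * Y (\<rho>, \<sigma>))"
    by (rule op_mult_eq_sum[OF U]) (use local_in_nonzero_fiber[OF X] in blast)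
  then have "op_star (op_mult X Y) (\<sigma>, \<tau>) = cnj (\<Sum>\<rho>\<in>?U. X (\<tau>, \<rho>) * Y (\<rho>, \<sigma>))"
    by (simp add: op_star_def)
  also have "\<dots> = (\<Sum>\<rho>\<in>?U. op_star Y (\<sigma>, \<rho>) * op_star X (\<rho>, \<tau>))"
    by (simp add: op_star_def mult.commute)
  also have "\<dots> = op_mult (op_star Y) (op_star X) (\<sigma>, \<tau>)"
    by (rule op_mult_eq_sum[OF U, symmetric]) (use local_in_nonzero_fiber[OF local_in_star[OF Y]] in blast)
  finally show "op_star (op_mult X Y) (\<sigma>, \<tau>) = op_mult (op_star Y) (op_star X) (\<sigma>, \<tau>)" .
qed

section \<open>The Hilbert--Schmidt inner product on Mat(T)\<close>

text \<open>The simplifier would eta-contract the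
  pointwise rules for \<open>+\<close>, \<open>0\<close>, \<open>-\<close> and \<open>fscale\<close> into unfoldings of these operations
  (e.g. \<open>0 = (\<lambda>x. 0)\<close>), which destroys terms like \<open>cfun.span E\<close>; so they are used only explicitly.\<close>

declare plus_fun_apply [simp del] zero_fun_apply [simp del] minus_apply [simp del] fscale_apply [simp del]

definition cfgs_on :: "('d site \<Rightarrow> nat) \<Rightarrow> 'd site set \<Rightarrow> 'd cfg set" where
  "cfgs_on p T = cfg_fiber p T (\<lambda>_. 0)"

text \<open>For X, Y in Mat(T) this is the Hilbert--Schmidt inner product of their Mat(T)-parts:
  the sites outside T are frozen to the configuration 0.\<close>

definition hs_inner :: "('d site \<Rightarrow> nat) \<Rightarrow> 'd site set \<Rightarrow> 'd op \<Rightarrow> 'd op \<Rightarrow> complex" where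
  "hs_inner p T X Y = (\<Sum>\<sigma>\<in>cfgs_on p T. \<Sum>\<tau>\<in>cfgs_on p T. X (\<sigma>, \<tau>) * cnj (Y (\<sigma>, \<tau>)))"

lemma finite_cfgs_on: "finite T \<Longrightarrow> finite (cfgs_on p T)"
  by (simp add: cfgs_on_def finite_cfg_fiber)

lemma cfg_fiber_cfgs_on: "\<sigma> \<in> cfgs_on p T \<Longrightarrow> cfg_fiber p T \<sigma> = cfgs_on p T"
  by (simp add: cfgs_on_def cfg_fiber_eq)

lemma hs_inner_diff_left: "hs_inner p T (X - Y) Z = hs_inner p T X Z - hs_inner p T Y Z"
  by (simp add: hs_inner_def minus_apply sum_subtractf left_diff_distrib)

lemma hs_inner_scale_left: "hs_inner p T (fscale k X) Z = k * hs_inner p T X Z"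
  by (simp add: hs_inner_def fscale_apply sum_distrib_left mult.assoc)

lemma hs_inner_zero_left: "hs_inner p T 0 Z = 0"
  by (simp add: hs_inner_def zero_fun_apply)

lemma hs_inner_add_right: "hs_inner p T X (Y + Z) = hs_inner p T X Y + hs_inner p T X Z"
  by (simp add: hs_inner_def plus_fun_apply sum.distrib distrib_left)

lemma hs_inner_diff_right: "hs_inner p T X (Y - Z) = hs_inner p T X Y - hs_inner p T X Z"
  by (simp add: hs_inner_def minus_apply sum_subtractf right_diff_distrib)

lemma hs_inner_scale_right: "hs_inner p T X (fscale k Y) = cnj k * hs_inner p T X Y"
  by (simp add: hs_inner_def fscale_apply sum_distrib_left mult_ac)

lemma hs_inner_zero_right: "hs_inner p T X 0 = 0"
  by (simp add: hs_inner_def zero_fun_apply)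

lemma hs_inner_sum_left: "hs_inner p T (\<Sum>i\<in>I. f i) Y = (\<Sum>i\<in>I. hs_inner p T (f i) Y)"
  by (simp add: hs_inner_def sum_fun_apply sum_distrib_right) (subst sum.swap, rule sum.cong, simp, rule sum.swap)

lemma hs_inner_cnj: "hs_inner p T Y X = cnj (hs_inner p T X Y)"
  by (simp add: hs_inner_def mult.commute)

lemma hs_inner_mult_left:
  assumes a: "local_in p T a"
  shows "hs_inner p T (op_mult a X) Y = hs_inner p T X (op_mult (op_star a) Y)"
proof -
  let ?O = "cfgs_on p T"
  have L: "op_mult a X (\<sigma>, \<tau>) = (\<Sum>\<rho>\<in>?O. a (\<sigma>, \<rho>) * X (\<rho>, \<tau>))" if "\<sigma> \<in> ?O" for \<sigma> \<tau>
    using op_mult_fiber[OF a] cfg_fiber_cfgs_on[OF that] by simp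
  have as: "local_in p T (op_star a)" using a by (rule local_in_star)
  have R: "op_mult (op_star a) Y (\<rho>, \<tau>) = (\<Sum>\<sigma>\<in>?O. cnj (a (\<sigma>, \<rho>)) * Y (\<sigma>, \<tau>))" if "\<rho> \<in> ?O" for \<rho> \<tau>
    using op_mult_fiber[OF as] cfg_fiber_cfgs_on[OF that] by (simp add: op_star_def)
  have "hs_inner p T (op_mult a X) Y = (\<Sum>\<sigma>\<in>?O. \<Sum>\<tau>\<in>?O. \<Sum>\<rho>\<in>?O. a (\<sigma>, \<rho>) * X (\<rho>, \<tau>) * cnj (Y (\<sigma>, \<tau>)))"
    unfolding hs_inner_def by (intro sum.cong refl) (simp add: L sum_distrib_right)
  also have "\<dots> = (\<Sum>\<sigma>\<in>?O. \<Sum>\<rho>\<in>?O. \<Sum>\<tau>\<in>?O. a (\<sigma>, \<rho>) * X (\<rho>, \<tau>) * cnj (Y (\<sigma>, \<tau>)))"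
    by (rule sum.cong[OF refl], rule sum.swap)
  also have "\<dots> = (\<Sum>\<rho>\<in>?O. \<Sum>\<sigma>\<in>?O. \<Sum>\<tau>\<in>?O. a (\<sigma>, \<rho>) * X (\<rho>, \<tau>) * cnj (Y (\<sigma>, \<tau>)))"
    by (rule sum.swap)
  also have "\<dots> = (\<Sum>\<rho>\<in>?O. \<Sum>\<tau>\<in>?O. \<Sum>\<sigma>\<in>?O. a (\<sigma>, \<rho>) * X (\<rho>, \<tau>) * cnj (Y (\<sigma>, \<tau>)))"
    by (rule sum.cong[OF refl], rule sum.swap)
  also have "\<dots> = hs_inner p T X (op_mult (op_star a) Y)"
    unfolding hs_inner_def by (intro sum.cong refl) (simp add: R sum_distrib_left mult_ac)
  finally show ?thesis .
qed

lemma hs_inner_mult_right: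
  assumes X: "local_in p T X" and Y: "local_in p T Y"
  shows "hs_inner p T (op_mult X a) Y = hs_inner p T X (op_mult Y (op_star a))"
proof -
  let ?O = "cfgs_on p T"
  have L: "op_mult X a (\<sigma>, \<tau>) = (\<Sum>\<rho>\<in>?O. X (\<sigma>, \<rho>) * a (\<rho>, \<tau>))" if "\<sigma> \<in> ?O" for \<sigma> \<tau>
    using op_mult_fiber[OF X] cfg_fiber_cfgs_on[OF that] by simp
  have R: "op_mult Y (op_star a) (\<sigma>, \<rho>) = (\<Sum>\<tau>\<in>?O. Y (\<sigma>, \<tau>) * cnj (a (\<rho>, \<tau>)))" if "\<sigma> \<in> ?O" for \<sigma> \<rho>
    using op_mult_fiber[OF Y] cfg_fiber_cfgs_on[OF that] by (simp add: op_star_def)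
  have "hs_inner p T (op_mult X a) Y = (\<Sum>\<sigma>\<in>?O. \<Sum>\<tau>\<in>?O. \<Sum>\<rho>\<in>?O. X (\<sigma>, \<rho>) * a (\<rho>, \<tau>) * cnj (Y (\<sigma>, \<tau>)))"
    unfolding hs_inner_def by (intro sum.cong refl) (simp add: L sum_distrib_right)
  also have "\<dots> = (\<Sum>\<sigma>\<in>?O. \<Sum>\<rho>\<in>?O. \<Sum>\<tau>\<in>?O. X (\<sigma>, \<rho>) * a (\<rho>, \<tau>) * cnj (Y (\<sigma>, \<tau>)))"
    by (rule sum.cong[OF refl], rule sum.swap)
  also have "\<dots> = hs_inner p T X (op_mult Y (op_star a))"
    unfolding hs_inner_def by (intro sum.cong refl) (simp add: R sum_distrib_left mult_ac)
  finally show ?thesis .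
qed

lemma restrict_cfg_in_cfgs_on:
  assumes "\<forall>s. 0 < p s" "\<sigma> \<in> cfgs p"
  shows "(\<lambda>s. if s \<in> T then \<sigma> s else 0) \<in> cfgs_on p T"
  using assms by (auto simp: cfgs_on_def cfg_fiber_def cfgs_def)

lemma hs_inner_self_eq_0D:
  assumes pp: "\<forall>s. 0 < p s" and X: "local_in p T X" and z: "hs_inner p T X X = 0"
  shows "X = 0"
proof -
  let ?O = "cfgs_on p T"
  have fO: "finite ?O" using X local_in_finite finite_cfgs_on by blast
  have "hs_inner p T X X = (\<Sum>\<sigma>\<in>?O. \<Sum>\<tau>\<in>?O. of_real ((norm (X (\<sigma>, \<tau>)))\<^sup>2))"
    unfolding hs_inner_def by (simp only: complex_norm_square)
  also have "\<dots> = of_real (\<Sum>\<sigma>\<in>?O. \<Sum>\<tau>\<in>?O. (norm (X (\<sigma>, \<tau>)))\<^sup>2)"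
    by simp
  finally have "hs_inner p T X X = of_real (\<Sum>\<sigma>\<in>?O. \<Sum>\<tau>\<in>?O. (norm (X (\<sigma>, \<tau>)))\<^sup>2)" .
  then have "(\<Sum>\<sigma>\<in>?O. \<Sum>\<tau>\<in>?O. (norm (X (\<sigma>, \<tau>)))\<^sup>2) = 0" using z by (metis of_real_eq_0_iff)
  then have Z: "X (\<sigma>, \<tau>) = 0" if "\<sigma> \<in> ?O" "\<tau> \<in> ?O" for \<sigma> \<tau>
    using that fO by (simp add: sum_nonneg_eq_0_iff sum_nonneg)
  show ?thesis
  proof (rule ext, clarify)
    fix \<sigma> \<tau>
    show "X (\<sigma>, \<tau>) = 0 (\<sigma>, \<tau>)"
    proof (rule ccontr)
      assume "X (\<sigma>, \<tau>) \<noteq> 0 (\<sigma>, \<tau>)"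
      then have nz: "X (\<sigma>, \<tau>) \<noteq> 0" by (simp add: zero_fun_apply)
      note h = local_in_nonzeroD[OF X nz]
      let ?s0 = "(\<lambda>s. if s \<in> T then \<sigma> s else 0)" and ?t0 = "(\<lambda>s. if s \<in> T then \<tau> s else 0)"
      have o: "?s0 \<in> ?O" "?t0 \<in> ?O" using restrict_cfg_in_cfgs_on[OF pp] h by auto
      then have c: "?s0 \<in> cfgs p" "?t0 \<in> cfgs p" by (auto simp: cfgs_on_def cfg_fiber_def)
      have "X (\<sigma>, \<tau>) = X (?s0, ?t0)"
        by (rule local_in_eqD[OF X]) (use h c in auto)
      then show False using Z[OF o] nz by simp
    qed
  qed
qed

lemma subspace_Mat_loc: "finite T \<Longrightarrow> cfun.subspace (Mat_loc p T)"
  unfolding cfun.subspace_def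
proof (intro conjI ballI allI)
  assume "finite T"
  then show "0 \<in> Mat_loc p T" using local_in_zero[of T p] by (simp add: mem_Mat_loc_iff)
next
  fix x y assume "x \<in> Mat_loc p T" "y \<in> Mat_loc p T"
  then show "x + y \<in> Mat_loc p T" using local_in_add by (auto simp: mem_Mat_loc_iff)
next
  fix c x assume "x \<in> Mat_loc p T"
  then show "fscale c x \<in> Mat_loc p T" using local_in_scale by (auto simp: mem_Mat_loc_iff)
qed

lemma hs_inner_span_eq_0:
  assumes "\<forall>e\<in>E. hs_inner p T z e = 0" "w \<in> cfun.span E"
  shows "hs_inner p T z w = 0"
  using assms(2)
proof (induction rule: cfun.span_induct_alt)
  case base then show ?case by (simp add: hs_inner_zero_right)
next
  case (step c x y) then show ?case using assms(1) by (simp add: hs_inner_add_right hs_inner_scale_right)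
qed

lemma hs_projection_extend:
  assumes pp: "\<forall>s. 0 < p s" and e: "local_in p T e" and e_perp: "\<forall>f\<in>E. hs_inner p T e f = 0"
    and xy_perp: "\<forall>f\<in>E. hs_inner p T (x - y) f = 0"
  obtains c where "\<forall>f\<in>insert e E. hs_inner p T (x - (y + fscale c e)) f = 0"
proof (cases "hs_inner p T e e = 0")
  case True
  then have "e = 0" by (rule hs_inner_self_eq_0D[OF pp e])
  then show ?thesis using that[of 0] xy_perp by (simp add: hs_inner_zero_right)
next
  case False
  define c where "c = hs_inner p T (x - y) e / hs_inner p T e e"
  have eq: "x - (y + fscale c e) = (x - y) - fscale c e" by (simp add: algebra_simps)
  have "hs_inner p T (x - (y + fscale c e)) f = hs_inner p T (x - y) f - c * hs_inner p T e f" for f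
    by (simp only: eq hs_inner_diff_left[of p T "x - y" "fscale c e" f] hs_inner_scale_left)
  then show ?thesis using that[of c] xy_perp e_perp False by (simp add: c_def)
qed

lemma hs_projection_onto_span_exists:
  assumes pp: "\<forall>s. 0 < p s" and fT: "finite T" and fE: "finite E" and E: "E \<subseteq> Mat_loc p T"
  shows "\<forall>x. local_in p T x \<longrightarrow> (\<exists>y\<in>cfun.span E. \<forall>e\<in>E. hs_inner p T (x - y) e = 0)"
  using fE E
proof (induction E rule: finite_induct)
  case empty
  then show ?case by (auto intro!: bexI[of _ 0] cfun.span_zero)
next
  case (insert e E)
  have span: "cfun.span E \<subseteq> cfun.span (insert e E)" by (rule cfun.span_mono) blast
  have "local_in p T e" using insert(4) by (auto simp: mem_Mat_loc_iff)
  then obtain y\<^sub>e where y\<^sub>e: "y\<^sub>e \<in> cfun.span E" "\<forall>f\<in>E. hs_inner p T (e - y\<^sub>e) f = 0" using insert by blast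
  have "e \<in> cfun.span (insert e E)" by (rule cfun.span_base) simp
  then have e'_span: "e - y\<^sub>e \<in> cfun.span (insert e E)"
    using cfun.span_diff y\<^sub>e(1) span by blast
  then have e': "local_in p T (e - y\<^sub>e)"
    using cfun.span_minimal[OF insert(4) subspace_Mat_loc[OF fT]] by (auto simp: mem_Mat_loc_iff)
  show ?case
  proof (intro allI impI)
    fix x assume "local_in p T x"
    then obtain y where y: "y \<in> cfun.span E" "\<forall>f\<in>E. hs_inner p T (x - y) f = 0" using insert by blast
    obtain c where c: "\<forall>f\<in>insert (e - y\<^sub>e) E. hs_inner p T (x - (y + fscale c (e - y\<^sub>e))) f = 0"
      by (rule hs_projection_extend[OF pp e' y\<^sub>e(2) y(2)])
    let ?y' = "y + fscale c (e - y\<^sub>e)"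
    have "?y' \<in> cfun.span (insert e E)" using y(1) span e'_span by (intro cfun.span_add cfun.span_scale) auto
    moreover have "hs_inner p T (x - ?y') y\<^sub>e = 0" using hs_inner_span_eq_0[OF _ y\<^sub>e(1)] c by blast
    then have "hs_inner p T (x - ?y') e = 0" using c by (simp add: hs_inner_diff_right)
    ultimately show "\<exists>y\<in>cfun.span (insert e E). \<forall>f\<in>insert e E. hs_inner p T (x - y) f = 0"
      using c by blast
  qed
qed

lemma hs_dual_vector:
  assumes pp: "\<forall>s. 0 < p s" and fT: "finite T" and fE: "finite E" and E: "E \<subseteq> Mat_loc p T"
    and ind: "cfun.independent E" and v0: "v0 \<in> E"
  obtains r where "r \<in> cfun.span E" "hs_inner p T v0 r \<noteq> 0"
    "\<And>v. v \<in> E - {v0} \<Longrightarrow> hs_inner p T v r = 0"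
proof -
  have "finite (E - {v0})" "E - {v0} \<subseteq> Mat_loc p T" "local_in p T v0"
    using fE E v0 by (auto simp: mem_Mat_loc_iff)
  then obtain y where y: "y \<in> cfun.span (E - {v0})" "\<forall>e\<in>E - {v0}. hs_inner p T (v0 - y) e = 0"
    using hs_projection_onto_span_exists[OF pp fT] by blast
  define r where "r = v0 - y"
  have "y \<in> cfun.span E" using y(1) cfun.span_mono[of "E - {v0}" E] by blast
  then have r_span: "r \<in> cfun.span E" unfolding r_def by (rule cfun.span_diff[OF cfun.span_base[OF v0]])
  have "r \<noteq> 0"
  proof
    assume "r = 0"
    then have "v0 \<in> cfun.span (E - {v0})" using y(1) by (simp add: r_def)
    then show False using ind v0 unfolding cfun.dependent_def by blast
  qed
  moreover have "local_in p T r"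
    using r_span cfun.span_minimal[OF E subspace_Mat_loc[OF fT]] by (auto simp: mem_Mat_loc_iff)
  ultimately have "hs_inner p T r r \<noteq> 0" using hs_inner_self_eq_0D[OF pp] by blast
  moreover have "hs_inner p T y r = 0"
    using hs_inner_cnj[of p T y r] hs_inner_span_eq_0[OF y(2) y(1)] by (simp add: r_def)
  then have "hs_inner p T v0 r = hs_inner p T r r" by (simp add: r_def hs_inner_diff_left)
  moreover have "hs_inner p T v r = 0" if "v \<in> E - {v0}" for v
    using y(2) that hs_inner_cnj[of p T v r] by (simp add: r_def)
  ultimately show ?thesis using that r_span by simp
qed

definition matrix_unit :: "('d site \<Rightarrow> nat) \<Rightarrow> 'd site set \<Rightarrow> 'd cfg \<Rightarrow> 'd cfg \<Rightarrow> 'd op" where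
  "matrix_unit p T \<rho> \<rho>' = (\<lambda>(\<sigma>, \<tau>). if \<sigma> \<in> cfgs p \<and> \<tau> \<in> cfgs p \<and> (\<forall>s\<in>T. \<sigma> s = \<rho> s \<and> \<tau> s = \<rho>' s) \<and>
      (\<forall>s. s \<notin> T \<longrightarrow> \<sigma> s = \<tau> s) then 1 else 0)"

lemma local_in_matrix_unit: "finite T \<Longrightarrow> local_in p T (matrix_unit p T \<rho> \<rho>')"
proof (rule local_inI)
  fix \<sigma> \<tau> assume "matrix_unit p T \<rho> \<rho>' (\<sigma>, \<tau>) \<noteq> 0"
  then show "\<sigma> \<in> cfgs p \<and> \<tau> \<in> cfgs p \<and> (\<forall>s. s \<notin> T \<longrightarrow> \<sigma> s = \<tau> s)"
    by (auto simp: matrix_unit_def split: if_splits)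
next
  fix \<sigma> \<tau> \<sigma>' \<tau>'
  assume "\<sigma> \<in> cfgs p" "\<tau> \<in> cfgs p" "\<sigma>' \<in> cfgs p" "\<tau>' \<in> cfgs p"
    "\<forall>s\<in>T. \<sigma> s = \<sigma>' s \<and> \<tau> s = \<tau>' s" "\<forall>s. s \<notin> T \<longrightarrow> \<sigma> s = \<tau> s \<and> \<sigma>' s = \<tau>' s"
  then show "matrix_unit p T \<rho> \<rho>' (\<sigma>, \<tau>) = matrix_unit p T \<rho> \<rho>' (\<sigma>', \<tau>')"
    by (simp add: matrix_unit_def)
qed

lemma mem_cfgs_on_iff: "\<rho> \<in> cfgs_on p T \<longleftrightarrow> \<rho> \<in> cfgs p \<and> (\<forall>s. s \<notin> T \<longrightarrow> \<rho> s = 0)"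
  by (simp add: cfgs_on_def cfg_fiber_def)

lemma matrix_unit_nonzero_eq:
  assumes "a \<in> cfgs_on p T" "b \<in> cfgs_on p T" "matrix_unit p T a b (\<sigma>, \<tau>) \<noteq> 0"
  shows "a = (\<lambda>s. if s \<in> T then \<sigma> s else 0) \<and> b = (\<lambda>s. if s \<in> T then \<tau> s else 0)"
  using assms by (auto simp: matrix_unit_def mem_cfgs_on_iff fun_eq_iff split: if_splits)

lemma matrix_unit_expansion:
  assumes pp: "\<forall>s. 0 < p s" and X: "local_in p T X"
  shows "X = (\<Sum>q\<in>cfgs_on p T \<times> cfgs_on p T. fscale (X q) (matrix_unit p T (fst q) (snd q)))"
proof (rule ext, clarify)
  fix \<sigma> \<tau>
  have fT: "finite T" using X local_in_finite by auto
  let ?Q = "cfgs_on p T \<times> cfgs_on p T"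
  have fQ: "finite ?Q" using finite_cfgs_on[OF fT] by simp
  have R: "(\<Sum>q\<in>?Q. fscale (X q) (matrix_unit p T (fst q) (snd q))) (\<sigma>, \<tau>) =
      (\<Sum>q\<in>?Q. X q * matrix_unit p T (fst q) (snd q) (\<sigma>, \<tau>))"
    by (simp add: sum_fun_apply fscale_apply)
  show "X (\<sigma>, \<tau>) = (\<Sum>q\<in>?Q. fscale (X q) (matrix_unit p T (fst q) (snd q))) (\<sigma>, \<tau>)"
  proof (cases "\<sigma> \<in> cfgs p \<and> \<tau> \<in> cfgs p \<and> (\<forall>s. s \<notin> T \<longrightarrow> \<sigma> s = \<tau> s)")
    case True
    define s0 where "s0 = (\<lambda>s. if s \<in> T then \<sigma> s else 0)"
    define t0 where "t0 = (\<lambda>s. if s \<in> T then \<tau> s else 0)"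
    have o: "s0 \<in> cfgs_on p T" "t0 \<in> cfgs_on p T" using restrict_cfg_in_cfgs_on[OF pp] True by (auto simp: s0_def t0_def)
    have "(\<Sum>q\<in>?Q. X q * matrix_unit p T (fst q) (snd q) (\<sigma>, \<tau>)) = X (s0, t0) * matrix_unit p T (fst (s0, t0)) (snd (s0, t0)) (\<sigma>, \<tau>)"
    proof (rule sum_eq_single[OF fQ, of "(s0, t0)"])
      fix q assume "q \<in> ?Q" "q \<noteq> (s0, t0)"
      then show "X q * matrix_unit p T (fst q) (snd q) (\<sigma>, \<tau>) = 0"
        using matrix_unit_nonzero_eq[of "fst q" p T "snd q" \<sigma> \<tau>] by (auto simp: s0_def t0_def prod_eq_iff)
    qed (use o in simp)
    also have "\<dots> = X (s0, t0)" using True by (simp add: matrix_unit_def s0_def t0_def)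
    also have "\<dots> = X (\<sigma>, \<tau>)"
      using o True by (intro local_in_eqD[OF X]) (auto simp: mem_cfgs_on_iff s0_def t0_def)
    finally show ?thesis using R by simp
  next
    case False
    then have "X (\<sigma>, \<tau>) = 0" using local_in_nonzeroD[OF X] by blast
    moreover have "matrix_unit p T (fst q) (snd q) (\<sigma>, \<tau>) = 0" for q using False by (simp add: matrix_unit_def)
    ultimately show ?thesis using R by simp
  qed
qed

lemma Mat_loc_subset_span_matrix_units:
  assumes pp: "\<forall>s. 0 < p s" and fT: "finite T"
  shows "Mat_loc p T \<subseteq> cfun.span ((\<lambda>q. matrix_unit p T (fst q) (snd q)) ` (cfgs_on p T \<times> cfgs_on p T))"
proof
  fix X assume "X \<in> Mat_loc p T"
  then have X: "local_in p T X" by (simp add: mem_Mat_loc_iff)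
  show "X \<in> cfun.span ((\<lambda>q. matrix_unit p T (fst q) (snd q)) ` (cfgs_on p T \<times> cfgs_on p T))"
    by (subst matrix_unit_expansion[OF pp X]) (intro cfun.span_sum cfun.span_scale cfun.span_base; blast)
qed

lemma Mat_loc_subspace_finite_span:
  assumes pp: "\<forall>s. 0 < p s" and fT: "finite T" and W: "W \<subseteq> Mat_loc p T"
  shows "\<exists>E. finite E \<and> E \<subseteq> W \<and> W \<subseteq> cfun.span E"
proof -
  obtain E where E: "E \<subseteq> W" "cfun.independent E" "W \<subseteq> cfun.span E"
    using cfun.maximal_independent_subset[of W] by blast
  let ?U = "(\<lambda>q. matrix_unit p T (fst q) (snd q)) ` (cfgs_on p T \<times> cfgs_on p T)"
  have "finite ?U" using finite_cfgs_on[OF fT] by simp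
  moreover have "E \<subseteq> cfun.span ?U" using E(1) W Mat_loc_subset_span_matrix_units[OF pp fT] by blast
  ultimately have "finite E" using cfun.independent_span_bound E(2) by blast
  then show ?thesis using E by blast
qed

definition hs_proj :: "('d site \<Rightarrow> nat) \<Rightarrow> 'd site set \<Rightarrow> 'd op set \<Rightarrow> 'd op \<Rightarrow> 'd op" where
  "hs_proj p T W x = (SOME y. y \<in> W \<and> (\<forall>w\<in>W. hs_inner p T (x - y) w = 0))"

lemma hs_proj:
  assumes pp: "\<forall>s. 0 < p s" and fT: "finite T" and W: "cfun.subspace W" "W \<subseteq> Mat_loc p T"
    and x: "local_in p T x"
  shows "hs_proj p T W x \<in> W \<and> (\<forall>w\<in>W. hs_inner p T (x - hs_proj p T W x) w = 0)"
proof -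
  obtain E where E: "finite E" "E \<subseteq> W" "W \<subseteq> cfun.span E"
    using Mat_loc_subspace_finite_span[OF pp fT W(2)] by blast
  obtain y where y: "y \<in> cfun.span E" "\<forall>e\<in>E. hs_inner p T (x - y) e = 0"
    using hs_projection_onto_span_exists[OF pp fT E(1)] E(2) W(2) x by blast
  have "y \<in> W" using y(1) cfun.span_minimal[OF E(2) W(1)] by blast
  moreover have "\<forall>w\<in>W. hs_inner p T (x - y) w = 0" using hs_inner_span_eq_0[OF y(2)] E(3) by blast
  ultimately have "\<exists>y. y \<in> W \<and> (\<forall>w\<in>W. hs_inner p T (x - y) w = 0)" by blast
  then show ?thesis unfolding hs_proj_def by (rule someI_ex)
qed

lemma hs_proj_unique:
  assumes pp: "\<forall>s. 0 < p s" and fT: "finite T" and W: "cfun.subspace W" "W \<subseteq> Mat_loc p T"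
    and x: "local_in p T x" and y: "y \<in> W" "\<forall>w\<in>W. hs_inner p T (x - y) w = 0"
  shows "hs_proj p T W x = y"
proof -
  note P = hs_proj[OF pp fT W x]
  let ?z = "hs_proj p T W x - y"
  have zW: "?z \<in> W" using P y(1) W(1) cfun.subspace_diff by blast
  have "hs_inner p T ?z ?z = hs_inner p T ((x - y) - (x - hs_proj p T W x)) ?z" by (simp add: algebra_simps)
  also have "\<dots> = 0" using P y(2) zW by (simp add: hs_inner_diff_left)
  finally have zz: "hs_inner p T ?z ?z = 0" .
  have "local_in p T ?z" using zW W(2) by (auto simp: mem_Mat_loc_iff)
  then have "?z = 0" using hs_inner_self_eq_0D[OF pp _ zz] by blast
  then show ?thesis by simp
qed


lemma op_mult_matrix_unit_right:
  assumes X: "local_in p S X" and r: "\<rho> \<in> cfgs_on p S" and t: "\<tau> \<in> cfgs p" "\<forall>s\<in>S. \<tau> s = \<rho>' s"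
  shows "op_mult X (matrix_unit p S \<rho> \<rho>') (\<sigma>, \<tau>) = X (\<sigma>, (\<lambda>s. if s \<in> S then \<rho> s else \<tau> s))"
proof -
  define \<mu> where "\<mu> = (\<lambda>s. if s \<in> S then \<rho> s else \<tau> s)"
  have fS: "finite S" using X local_in_finite by auto
  let ?F = "insert \<mu> (cfg_fiber p S \<sigma>)"
  have fF: "finite ?F" using finite_cfg_fiber[OF fS] by simp
  have mc: "\<mu> \<in> cfgs p" using r t by (auto simp: \<mu>_def mem_cfgs_on_iff cfgs_def)
  have "op_mult X (matrix_unit p S \<rho> \<rho>') (\<sigma>, \<tau>) = (\<Sum>m\<in>?F. X (\<sigma>, m) * matrix_unit p S \<rho> \<rho>' (m, \<tau>))"
    by (rule op_mult_eq_sum[OF fF]) (use local_in_nonzero_fiber[OF X] in blast)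
  also have "\<dots> = X (\<sigma>, \<mu>) * matrix_unit p S \<rho> \<rho>' (\<mu>, \<tau>)"
  proof (rule sum_eq_single[OF fF])
    fix m assume m: "m \<in> ?F" "m \<noteq> \<mu>"
    have "matrix_unit p S \<rho> \<rho>' (m, \<tau>) = 0"
    proof (rule ccontr)
      assume "matrix_unit p S \<rho> \<rho>' (m, \<tau>) \<noteq> 0"
      then have "(\<forall>s\<in>S. m s = \<rho> s) \<and> (\<forall>s. s \<notin> S \<longrightarrow> m s = \<tau> s)"
        by (auto simp: matrix_unit_def split: if_splits)
      then have "m = \<mu>" by (auto simp: \<mu>_def fun_eq_iff)
      then show False using m by simp
    qed
    then show "X (\<sigma>, m) * matrix_unit p S \<rho> \<rho>' (m, \<tau>) = 0" by simp
  qed simp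
  also have "matrix_unit p S \<rho> \<rho>' (\<mu>, \<tau>) = 1"
    using mc t by (auto simp: matrix_unit_def \<mu>_def)
  finally show ?thesis by (simp add: \<mu>_def)
qed

lemma op_mult_matrix_unit_left:
  assumes X: "local_in p S X" and r: "\<rho>' \<in> cfgs_on p S" and sg: "\<sigma> \<in> cfgs p" "\<forall>s\<in>S. \<sigma> s = \<rho> s"
  shows "op_mult (matrix_unit p S \<rho> \<rho>') X (\<sigma>, \<tau>) = X ((\<lambda>s. if s \<in> S then \<rho>' s else \<sigma> s), \<tau>)"
proof -
  define \<nu> where "\<nu> = (\<lambda>s. if s \<in> S then \<rho>' s else \<sigma> s)"
  have nc: "\<nu> \<in> cfgs p" using r sg by (auto simp: \<nu>_def mem_cfgs_on_iff cfgs_def)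
  have "op_mult (matrix_unit p S \<rho> \<rho>') X (\<sigma>, \<tau>) = (\<Sum>m\<in>{\<nu>}. matrix_unit p S \<rho> \<rho>' (\<sigma>, m) * X (m, \<tau>))"
  proof (rule op_mult_eq_sum)
    show "{m. matrix_unit p S \<rho> \<rho>' (\<sigma>, m) \<noteq> 0} \<subseteq> {\<nu>}"
      by (auto simp: matrix_unit_def \<nu>_def fun_eq_iff split: if_splits) metis
  qed simp
  moreover have "matrix_unit p S \<rho> \<rho>' (\<sigma>, \<nu>) = 1" using nc sg by (auto simp: matrix_unit_def \<nu>_def)
  ultimately show ?thesis by (simp add: \<nu>_def)
qed

lemma op_mult_matrix_unit_left_eq_0:
  assumes "\<not> (\<forall>s\<in>S. \<sigma> s = \<rho> s)"
  shows "op_mult (matrix_unit p S \<rho> \<rho>') X (\<sigma>, \<tau>) = 0"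
proof -
  have "op_mult (matrix_unit p S \<rho> \<rho>') X (\<sigma>, \<tau>) = (\<Sum>m\<in>{}. matrix_unit p S \<rho> \<rho>' (\<sigma>, m) * X (m, \<tau>))"
    by (rule op_mult_eq_sum) (use assms in \<open>auto simp: matrix_unit_def split: if_splits\<close>)
  then show ?thesis by simp
qed

lemma local_in_central_offdiag:
  assumes pp: "\<forall>s. 0 < p s" and X: "local_in p S X"
    and comm: "\<And>Y. local_in p S Y \<Longrightarrow> op_mult X Y = op_mult Y X" and "\<sigma> \<noteq> \<tau>"
  shows "X (\<sigma>, \<tau>) = 0"
proof (rule ccontr)
  assume nz: "X (\<sigma>, \<tau>) \<noteq> 0"
  note h = local_in_nonzeroD[OF X nz]
  define \<tau>\<^sub>S where "\<tau>\<^sub>S = (\<lambda>s. if s \<in> S then \<tau> s else 0)"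
  have \<tau>\<^sub>S: "\<tau>\<^sub>S \<in> cfgs_on p S" using restrict_cfg_in_cfgs_on[OF pp] h by (simp add: \<tau>\<^sub>S_def)
  have U: "local_in p S (matrix_unit p S \<tau>\<^sub>S \<tau>\<^sub>S)" by (rule local_in_matrix_unit[OF local_in_finite[OF X]])
  have "op_mult X (matrix_unit p S \<tau>\<^sub>S \<tau>\<^sub>S) (\<sigma>, \<tau>) = X (\<sigma>, \<tau>)"
    using op_mult_matrix_unit_right[OF X \<tau>\<^sub>S, of \<tau> \<tau>\<^sub>S \<sigma>] h by (simp add: \<tau>\<^sub>S_def if_distrib cong: if_cong)
  moreover have "\<not> (\<forall>s\<in>S. \<sigma> s = \<tau>\<^sub>S s)"
  proof
    assume "\<forall>s\<in>S. \<sigma> s = \<tau>\<^sub>S s"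
    then have "\<sigma> = \<tau>" using h by (auto simp: \<tau>\<^sub>S_def fun_eq_iff)
    then show False using \<open>\<sigma> \<noteq> \<tau>\<close> by simp
  qed
  then have "op_mult (matrix_unit p S \<tau>\<^sub>S \<tau>\<^sub>S) X (\<sigma>, \<tau>) = 0" by (rule op_mult_matrix_unit_left_eq_0)
  ultimately show False using comm[OF U] nz by simp
qed

lemma local_in_central_diag:
  assumes pp: "\<forall>s. 0 < p s" and X: "local_in p S X"
    and comm: "\<And>Y. local_in p S Y \<Longrightarrow> op_mult X Y = op_mult Y X" and \<sigma>: "\<sigma> \<in> cfgs p"
  shows "X (\<sigma>, \<sigma>) = X (\<lambda>_. 0, \<lambda>_. 0)"
proof -
  define z :: "'a cfg" where "z = (\<lambda>_. 0)"
  have z: "z \<in> cfgs_on p S" "z \<in> cfgs p" using pp by (auto simp: z_def mem_cfgs_on_iff cfgs_def)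
  define \<sigma>\<^sub>S where "\<sigma>\<^sub>S = (\<lambda>s. if s \<in> S then \<sigma> s else 0)"
  define \<sigma>' where "\<sigma>' = (\<lambda>s. if s \<in> S then 0 else \<sigma> s)"
  have \<sigma>\<^sub>S: "\<sigma>\<^sub>S \<in> cfgs_on p S" using restrict_cfg_in_cfgs_on[OF pp \<sigma>] by (simp add: \<sigma>\<^sub>S_def)
  have \<sigma>': "\<sigma>' \<in> cfgs p" using \<sigma> pp by (auto simp: \<sigma>'_def cfgs_def)
  have U: "local_in p S (matrix_unit p S \<sigma>\<^sub>S z)" by (rule local_in_matrix_unit[OF local_in_finite[OF X]])
  have "op_mult X (matrix_unit p S \<sigma>\<^sub>S z) (\<sigma>, \<sigma>') = X (\<sigma>, \<sigma>)"
    using op_mult_matrix_unit_right[OF X \<sigma>\<^sub>S \<sigma>', of z \<sigma>]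
    by (simp add: \<sigma>'_def z_def \<sigma>\<^sub>S_def if_distrib cong: if_cong)
  moreover have "op_mult (matrix_unit p S \<sigma>\<^sub>S z) X (\<sigma>, \<sigma>') = X (\<sigma>', \<sigma>')"
    using op_mult_matrix_unit_left[OF X z(1) \<sigma>, of \<sigma>\<^sub>S \<sigma>'] by (simp add: \<sigma>'_def z_def \<sigma>\<^sub>S_def cong: if_cong)
  ultimately have "X (\<sigma>, \<sigma>) = X (\<sigma>', \<sigma>')" using comm[OF U] by simp
  also have "\<dots> = X (z, z)"
    by (rule local_in_eqD[OF X \<sigma>' \<sigma>' z(2) z(2)]) (auto simp: \<sigma>'_def z_def)
  finally show ?thesis by (simp add: z_def)
qed

lemma local_in_central_scalar:
  assumes pp: "\<forall>s. 0 < p s" and X: "local_in p S X"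
    and comm: "\<And>Y. local_in p S Y \<Longrightarrow> op_mult X Y = op_mult Y X"
  shows "\<exists>k. X = fscale k (op_one p)"
proof -
  have "X (\<sigma>, \<tau>) = fscale (X (\<lambda>_. 0, \<lambda>_. 0)) (op_one p) (\<sigma>, \<tau>)" for \<sigma> \<tau>
  proof (cases "\<sigma> = \<tau> \<and> \<sigma> \<in> cfgs p")
    case True
    then show ?thesis using local_in_central_diag[OF assms] by (auto simp: fscale_apply op_one_def)
  next
    case False
    then have "X (\<sigma>, \<tau>) = 0" using local_in_central_offdiag[OF assms] local_in_nonzeroD[OF X] by blast
    then show ?thesis using False by (auto simp: fscale_apply op_one_def)
  qed
  then show ?thesis by (intro exI ext) auto
qed

lemma op_mult_disjoint_local:
  assumes X: "local_in p S X" and Y: "local_in p R Y" and d: "S \<inter> R = {}"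
  shows "op_mult X Y (\<sigma>, \<tau>) =
    X (\<sigma>, \<lambda>s. if s \<in> S then \<tau> s else \<sigma> s) * Y (\<lambda>s. if s \<in> S then \<tau> s else \<sigma> s, \<tau>)"
proof -
  define \<mu> where "\<mu> = (\<lambda>s. if s \<in> S then \<tau> s else \<sigma> s)"
  let ?F = "insert \<mu> (cfg_fiber p S \<sigma>)"
  have F: "finite ?F" using finite_cfg_fiber[OF local_in_finite[OF X]] by simp
  have "op_mult X Y (\<sigma>, \<tau>) = (\<Sum>m\<in>?F. X (\<sigma>, m) * Y (m, \<tau>))"
    by (rule op_mult_eq_sum[OF F]) (use local_in_nonzero_fiber[OF X] in auto)
  also have "\<dots> = X (\<sigma>, \<mu>) * Y (\<mu>, \<tau>)"
  proof (rule sum_eq_single[OF F])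
    fix m assume m: "m \<in> ?F" "m \<noteq> \<mu>"
    show "X (\<sigma>, m) * Y (m, \<tau>) = 0"
    proof (rule ccontr)
      assume "X (\<sigma>, m) * Y (m, \<tau>) \<noteq> 0"
      then have "\<forall>s. s \<notin> S \<longrightarrow> \<sigma> s = m s" "\<forall>s. s \<notin> R \<longrightarrow> m s = \<tau> s"
        using local_in_nonzeroD[OF X, of \<sigma> m] local_in_nonzeroD[OF Y, of m \<tau>] by auto
      then have "m = \<mu>" using d by (auto simp: \<mu>_def fun_eq_iff)
      then show False using m by simp
    qed
  qed simp
  finally show ?thesis by (simp add: \<mu>_def)
qed

text \<open>Both products have a single nonzero term, through the intermediate configurations obtained
  from \<open>\<sigma>\<close> by inserting \<open>\<tau>\<close> on S, respectively on R; locality identifies the factors.\<close>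

lemma local_in_disjoint_commute:
  assumes X: "local_in p S X" and Y: "local_in p R Y" and d: "S \<inter> R = {}"
  shows "op_mult X Y = op_mult Y X"
proof (rule ext, clarify)
  fix \<sigma> \<tau>
  have fU: "finite (S \<union> R)" using X Y local_in_finite by auto
  have XU: "local_in p (S \<union> R) X" by (rule local_in_mono[OF X _ fU]) auto
  have YU: "local_in p (S \<union> R) Y" by (rule local_in_mono[OF Y _ fU]) auto
  show "op_mult X Y (\<sigma>, \<tau>) = op_mult Y X (\<sigma>, \<tau>)"
  proof (cases "\<sigma> \<in> cfgs p \<and> \<tau> \<in> cfgs p \<and> (\<forall>s. s \<notin> S \<union> R \<longrightarrow> \<sigma> s = \<tau> s)")
    case False
    then have "op_mult X Y (\<sigma>, \<tau>) = 0" "op_mult Y X (\<sigma>, \<tau>) = 0"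
      using local_in_nonzeroD[OF local_in_mult[OF XU YU]] local_in_nonzeroD[OF local_in_mult[OF YU XU]]
      by blast+
    then show ?thesis by simp
  next
    case True
    define m1 where "m1 = (\<lambda>s. if s \<in> S then \<tau> s else \<sigma> s)"
    define m2 where "m2 = (\<lambda>s. if s \<in> R then \<tau> s else \<sigma> s)"
    have m: "m1 \<in> cfgs p" "m2 \<in> cfgs p" using True by (auto simp: m1_def m2_def cfgs_def)
    have c: "\<sigma> \<in> cfgs p" "\<tau> \<in> cfgs p" using True by auto
    have "op_mult X Y (\<sigma>, \<tau>) = X (\<sigma>, m1) * Y (m1, \<tau>)"
      unfolding m1_def by (rule op_mult_disjoint_local[OF X Y d])
    also have "X (\<sigma>, m1) = X (m2, \<tau>)"
      by (rule local_in_eqD[OF X c(1) m(1) m(2) c(2)]) (use True d in \<open>auto simp: m1_def m2_def\<close>)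
    also have "Y (m1, \<tau>) = Y (\<sigma>, m2)"
      by (rule local_in_eqD[OF Y m(1) c(2) c(1) m(2)]) (use True d in \<open>auto simp: m1_def m2_def\<close>)
    also have "X (m2, \<tau>) * Y (\<sigma>, m2) = op_mult Y X (\<sigma>, \<tau>)"
      unfolding m2_def using op_mult_disjoint_local[OF Y X, of \<sigma> \<tau>] d by (simp add: Int_commute)
    finally show ?thesis .
  qed
qed

lemma abs_component_le_linf_dist:
  fixes s t :: "'d::finite site"
  shows "\<bar>s $ i - t $ i\<bar> \<le> linf_dist s t"
  unfolding linf_dist_def by (rule Max_ge) auto

lemma linf_dist_self [simp]: "linf_dist (s::'d::finite site) s = 0"
proof -
  have "range (\<lambda>i. \<bar>s $ i - s $ i\<bar>) = {0}" by auto
  then show ?thesis by (simp add: linf_dist_def)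
qed

lemma subset_thicken: "S \<subseteq> thicken (S::'d::finite site set) l"
  by (force simp: thicken_def)

lemma thicken_singleton_subset: "s \<in> S \<Longrightarrow> thicken {s} l \<subseteq> thicken (S::'d::finite site set) l"
  by (auto simp: thicken_def)

lemma finite_thicken_singleton: "finite (thicken {s::'d::finite site} l)"
proof -
  let ?box = "PiE UNIV (\<lambda>i. {s $ i - int l .. s $ i + int l})"
  have "thicken {s} l \<subseteq> (\<lambda>f. \<chi> i. f i) ` ?box"
  proof
    fix t assume "t \<in> thicken {s} l"
    then have "\<bar>s $ i - t $ i\<bar> \<le> int l" for i
      using abs_component_le_linf_dist[where s=s and t=t and i=i] by (simp add: thicken_def)
    then have "t $ i \<in> {s $ i - int l .. s $ i + int l}" for i
      by (simp add: abs_le_iff) (smt (verit))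
    then have "(\<lambda>i. t $ i) \<in> ?box" by auto
    then show "t \<in> (\<lambda>f. \<chi> i. f i) ` ?box" by (metis (no_types) image_eqI vec_lambda_eta)
  qed
  moreover have "finite ?box" by (intro finite_PiE) auto
  ultimately show ?thesis by (meson finite_surj)
qed

lemma finite_thicken: "finite S \<Longrightarrow> finite (thicken (S::'d::finite site set) l)"
proof -
  have "thicken S l = (\<Union>s\<in>S. thicken {s} l)" by (auto simp: thicken_def)
  then show "finite S \<Longrightarrow> ?thesis" using finite_thicken_singleton by auto
qed

definition thick_boundary :: "'d::finite site set \<Rightarrow> nat \<Rightarrow> 'd site set" where
  "thick_boundary T l = {t\<in>T. \<not> thicken {t} l \<subseteq> T}"

lemma finite_thick_boundary: "finite T \<Longrightarrow> finite (thick_boundary T l)"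
  by (simp add: thick_boundary_def)

lemma disjoint_thick_boundary_thicken: "S \<inter> thick_boundary (thicken S l) l = {}"
  using thicken_singleton_subset[of _ S l] by (auto simp: thick_boundary_def)

section \<open>Conditional expectations\<close>

locale cond_expectation =
  fixes p :: "'d site \<Rightarrow> nat" and T :: "'d site set" and W :: "'d op set"
  assumes p_pos: "\<forall>s. 0 < p s" and finite_T: "finite T"
    and subspace_W: "cfun.subspace W" and W_local: "W \<subseteq> Mat_loc p T"
    and W_mult: "\<And>u w. u \<in> W \<Longrightarrow> w \<in> W \<Longrightarrow> op_mult u w \<in> W"
    and W_star: "\<And>u. u \<in> W \<Longrightarrow> op_star u \<in> W"
begin

abbreviation "P \<equiv> hs_proj p T W"

lemma local_in_W: "w \<in> W \<Longrightarrow> local_in p T w"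
  using W_local by (auto simp: mem_Mat_loc_iff)

lemma P_mem: "local_in p T x \<Longrightarrow> P x \<in> W"
  using hs_proj[OF p_pos finite_T subspace_W W_local] by blast

lemma P_orthogonal: "local_in p T x \<Longrightarrow> w \<in> W \<Longrightarrow> hs_inner p T (x - P x) w = 0"
  using hs_proj[OF p_pos finite_T subspace_W W_local] by blast

lemma P_unique: "local_in p T x \<Longrightarrow> y \<in> W \<Longrightarrow> (\<forall>w\<in>W. hs_inner p T (x - y) w = 0) \<Longrightarrow> P x = y"
  by (rule hs_proj_unique[OF p_pos finite_T subspace_W W_local])

lemma local_in_P: "local_in p T x \<Longrightarrow> local_in p T (P x)"
  using P_mem local_in_W by blast

lemma P_zero: "P 0 = 0"
  by (rule P_unique) (auto simp: local_in_zero[OF finite_T] cfun.subspace_0[OF subspace_W] hs_inner_zero_left)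

lemma P_sum:
  assumes "finite I" and loc: "\<And>i. i \<in> I \<Longrightarrow> local_in p T (f i)"
  shows "P (\<Sum>i\<in>I. f i) = (\<Sum>i\<in>I. P (f i))"
proof (rule P_unique)
  show "local_in p T (\<Sum>i\<in>I. f i)" using assms finite_T by (intro local_in_sum)
  show "(\<Sum>i\<in>I. P (f i)) \<in> W"
    by (rule cfun.subspace_sum[OF subspace_W]) (use P_mem[OF loc] in blast)
  show "\<forall>w\<in>W. hs_inner p T ((\<Sum>i\<in>I. f i) - (\<Sum>i\<in>I. P (f i))) w = 0"
    using P_orthogonal[OF loc] by (simp add: sum_subtractf[symmetric] hs_inner_sum_left)
qed

text \<open>P is a W-bimodule map: the orthogonality conditions for \<open>c x\<close> and \<open>x c\<close> reduce to those
  for x by moving c to the other side of the inner product as its adjoint, which stays in W.\<close>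

lemma P_mult_left:
  assumes c: "c \<in> W" and x: "local_in p T x"
  shows "P (op_mult c x) = op_mult c (P x)"
proof (rule P_unique)
  show "local_in p T (op_mult c x)" using local_in_W[OF c] x by (rule local_in_mult)
  show "op_mult c (P x) \<in> W" using W_mult[OF c P_mem[OF x]] .
  show "\<forall>w\<in>W. hs_inner p T (op_mult c x - op_mult c (P x)) w = 0"
    using P_orthogonal[OF x W_mult[OF W_star[OF c]]]
    by (simp add: op_mult_diff_right[symmetric] hs_inner_mult_left[OF local_in_W[OF c]])
qed

lemma P_mult_right:
  assumes c: "c \<in> W" and x: "local_in p T x"
  shows "P (op_mult x c) = op_mult (P x) c"
proof (rule P_unique)
  show "local_in p T (op_mult x c)" using x local_in_W[OF c] by (rule local_in_mult)
  show "op_mult (P x) c \<in> W" using W_mult[OF P_mem[OF x] c] .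
  have d: "local_in p T (x - P x)" using x local_in_P[OF x] by (rule local_in_diff)
  show "\<forall>w\<in>W. hs_inner p T (op_mult x c - op_mult (P x) c) w = 0"
    using P_orthogonal[OF x W_mult[OF _ W_star[OF c]]]
    by (simp add: op_mult_diff_left[OF x local_in_P[OF x], symmetric] hs_inner_mult_right[OF d local_in_W])
qed

lemma P_commute:
  assumes "local_in p T x" and "\<And>c. c \<in> W \<Longrightarrow> op_mult c x = op_mult x c" and "c \<in> W"
  shows "op_mult c (P x) = op_mult (P x) c"
  using P_mult_left[OF assms(3,1)] P_mult_right[OF assms(3,1)] assms(2,3) by simp

lemma hs_inner_P_one:
  assumes "local_in p T x" and "op_one p \<in> W"
  shows "hs_inner p T (P x) (op_one p) = hs_inner p T x (op_one p)"
  using P_orthogonal[OF assms] by (simp add: hs_inner_diff_left)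

end

lemma cond_expectation_Mat_loc:
  assumes "\<forall>s. 0 < p s" "finite T" "S \<subseteq> T"
  shows "cond_expectation p T (Mat_loc p S)"
proof
  have S: "finite S" using assms finite_subset by blast
  show "cfun.subspace (Mat_loc p S)" by (rule subspace_Mat_loc[OF S])
  show "Mat_loc p S \<subseteq> Mat_loc p T"
    using assms local_in_mono by (auto simp: mem_Mat_loc_iff)
qed (use assms in \<open>auto simp: mem_Mat_loc_iff local_in_mult local_in_star\<close>)

locale commutant_pair =
  fixes p :: "'d::finite site \<Rightarrow> nat" and A B :: "'d op set"
  assumes subalg: "unital_star_subalg p A"
    and B_eq: "B = commutant p A"
begin

lemma A_Mat: "a \<in> A \<Longrightarrow> a \<in> Mat p"
  using subalg by (auto simp: unital_star_subalg_def)

lemma A_one: "op_one p \<in> A"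
  using subalg by (auto simp: unital_star_subalg_def)

lemma A_mult: "a \<in> A \<Longrightarrow> b \<in> A \<Longrightarrow> op_mult a b \<in> A"
  using subalg by (auto simp: unital_star_subalg_def)

lemma A_scale: "a \<in> A \<Longrightarrow> fscale k a \<in> A"
  using subalg by (auto simp: unital_star_subalg_def)

lemma A_star: "a \<in> A \<Longrightarrow> op_star a \<in> A"
  using subalg by (auto simp: unital_star_subalg_def)

lemma A_subspace: "cfun.subspace A"
proof -
  have "0 = fscale 0 (op_one p)" by (simp add: fun_eq_iff fscale_apply zero_fun_apply)
  then have "0 \<in> A" using A_scale[OF A_one] by metis
  then show ?thesis
    using subalg A_scale by (auto simp: cfun.subspace_def unital_star_subalg_def fadd_eq)
qed

lemma A_sum: "(\<And>i. i \<in> I \<Longrightarrow> f i \<in> A) \<Longrightarrow> (\<Sum>i\<in>I. f i) \<in> A"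
  using A_subspace cfun.subspace_sum by blast

lemma B_Mat: "b \<in> B \<Longrightarrow> b \<in> Mat p"
  using B_eq by (auto simp: commutant_def)

lemma B_commute: "a \<in> A \<Longrightarrow> b \<in> B \<Longrightarrow> op_mult a b = op_mult b a"
  using B_eq by (auto simp: commutant_def)

lemma B_I: "b \<in> Mat p \<Longrightarrow> (\<And>a. a \<in> A \<Longrightarrow> op_mult a b = op_mult b a) \<Longrightarrow> b \<in> B"
  using B_eq by (auto simp: commutant_def)

lemma B_subspace: "cfun.subspace B"
  unfolding cfun.subspace_def
proof (intro conjI ballI allI)
  show "0 \<in> B"
    using local_in_zero[of "{}" p] by (intro B_I) (auto simp: mem_Mat_iff)
next
  fix b b' assume b: "b \<in> B" "b' \<in> B"
  then obtain S where S: "local_in p S b" "local_in p S b'" using B_Mat Mat_common_local2 by metis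
  show "b + b' \<in> B"
  proof (rule B_I)
    show "b + b' \<in> Mat p" using local_in_add[OF S] mem_Mat_iff by blast
    show "op_mult a (b + b') = op_mult (b + b') a" if "a \<in> A" for a
      using B_commute[OF that b(1)] B_commute[OF that b(2)]
      by (simp add: op_mult_add_right op_mult_add_left[OF S])
  qed
next
  fix k b assume b: "b \<in> B"
  then obtain S where S: "local_in p S b" using B_Mat mem_Mat_iff by blast
  show "fscale k b \<in> B"
  proof (rule B_I)
    show "fscale k b \<in> Mat p" using local_in_scale[OF S] mem_Mat_iff by blast
    show "op_mult a (fscale k b) = op_mult (fscale k b) a" if "a \<in> A" for a
      using B_commute[OF that b] by (simp add: op_mult_scale_right op_mult_scale_left[OF S])
  qed
qed

lemma B_sum: "(\<And>i. i \<in> I \<Longrightarrow> f i \<in> B) \<Longrightarrow> (\<Sum>i\<in>I. f i) \<in> B"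
  using B_subspace cfun.subspace_sum by blast

lemma B_mult:
  assumes b: "b \<in> B" and b': "b' \<in> B"
  shows "op_mult b b' \<in> B"
proof (rule B_I)
  obtain S where "local_in p S b" "local_in p S b'" using assms B_Mat Mat_common_local2 by metis
  then show "op_mult b b' \<in> Mat p" using local_in_mult mem_Mat_iff by blast
  fix a assume a: "a \<in> A"
  obtain U where "finite U" "\<And>x. x \<in> {a, b, b'} \<Longrightarrow> local_in p U (id x)"
    by (rule Mat_common_local[of "{a, b, b'}" id p]) (use A_Mat[OF a] B_Mat[OF b] B_Mat[OF b'] in auto)
  then have U: "local_in p U a" "local_in p U b" "local_in p U b'" by auto
  have "op_mult a (op_mult b b') = op_mult (op_mult a b) b'" using U by (simp add: op_mult_assoc)
  also have "\<dots> = op_mult b (op_mult a b')" using U B_commute[OF a b] by (simp add: op_mult_assoc)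
  also have "\<dots> = op_mult (op_mult b b') a" using U B_commute[OF a b'] by (simp add: op_mult_assoc)
  finally show "op_mult a (op_mult b b') = op_mult (op_mult b b') a" .
qed

lemma B_star:
  assumes b: "b \<in> B"
  shows "op_star b \<in> B"
proof (rule B_I)
  obtain S where "local_in p S b" using assms B_Mat mem_Mat_iff by blast
  then show "op_star b \<in> Mat p" using local_in_star mem_Mat_iff by blast
  fix a assume a: "a \<in> A"
  obtain U where U: "local_in p U a" "local_in p U b"
    using A_Mat[OF a] B_Mat[OF b] Mat_common_local2 by metis
  have "op_mult a (op_star b) = op_star (op_mult b (op_star a))"
    using op_star_mult[OF U(2) local_in_star[OF U(1)]] by (simp add: op_star_def)
  also have "\<dots> = op_star (op_mult (op_star a) b)" using B_commute[OF A_star[OF a] b] by simp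
  also have "\<dots> = op_mult (op_star b) a"
    using op_star_mult[OF local_in_star[OF U(1)] U(2)] by (simp add: op_star_def)
  finally show "op_mult a (op_star b) = op_mult (op_star b) a" .
qed

lemma B_one: "op_one p \<in> B"
proof (rule B_I)
  show "op_one p \<in> Mat p" using local_in_one_empty mem_Mat_iff by blast
  fix a assume "a \<in> A"
  then obtain S where "local_in p S a" using A_Mat mem_Mat_iff by blast
  then show "op_mult a (op_one p) = op_mult (op_one p) a" by (simp add: op_one_mult op_mult_one)
qed

lemma op_mult_interchange:
  assumes a: "a \<in> A" "a' \<in> A" and b: "b \<in> B" "b' \<in> B"
  shows "op_mult (op_mult a b) (op_mult a' b') = op_mult (op_mult a a') (op_mult b b')"
proof -
  obtain S where "finite S" "\<And>x. x \<in> {a, a', b, b'} \<Longrightarrow> local_in p S (id x)"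
    by (rule Mat_common_local[of "{a, a', b, b'}" id p]) (use a b A_Mat B_Mat in auto)
  then have l: "local_in p S a" "local_in p S a'" "local_in p S b" "local_in p S b'" by auto
  have "op_mult (op_mult a b) (op_mult a' b') = op_mult a (op_mult b (op_mult a' b'))"
    by (rule op_mult_assoc[OF l(1,3)])
  also have "op_mult b (op_mult a' b') = op_mult (op_mult b a') b'"
    by (rule op_mult_assoc[OF l(3,2), symmetric])
  also have "op_mult b a' = op_mult a' b" using B_commute[OF a(2) b(1)] by simp
  also have "op_mult (op_mult a' b) b' = op_mult a' (op_mult b b')" by (rule op_mult_assoc[OF l(2,3)])
  also have "op_mult a (op_mult a' (op_mult b b')) = op_mult (op_mult a a') (op_mult b b')"
    by (rule op_mult_assoc[OF l(1,2), symmetric])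
  finally show ?thesis .
qed

lemma op_star_mult_commute:
  assumes "a \<in> A" "b \<in> B"
  shows "op_star (op_mult a b) = op_mult (op_star a) (op_star b)"
proof -
  obtain S where S: "local_in p S a" "local_in p S b"
    using assms A_Mat B_Mat Mat_common_local2 by metis
  show ?thesis
    using op_star_mult[OF S] B_commute[OF A_star[OF assms(1)] B_star[OF assms(2)]] by simp
qed

end

section \<open>Injectivity on independent families of the commutant\<close>

locale vs_commutant_pair = commutant_pair p A B for p :: "'d::finite site \<Rightarrow> nat" and A B +
  fixes l :: nat
  assumes p_pos: "\<forall>s. 0 < p s"
    and noncentral_witness: "\<forall>a\<in>A. a \<notin> {fscale k (op_one p) | k. True} \<longrightarrow>
      (\<forall>s\<in>Supp p a. \<exists>w\<in>A \<inter> Mat_loc p (thicken {s} l). op_mult a w \<noteq> op_mult w a)"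
begin

lemma cond_expectation_A_local: "finite T \<Longrightarrow> cond_expectation p T (A \<inter> Mat_loc p T)"
  by unfold_locales
    (auto simp: p_pos mem_Mat_loc_iff A_mult A_star local_in_mult local_in_star
      intro: cfun.subspace_inter A_subspace subspace_Mat_loc)

text \<open>This is where the VS property enters: an element of the relative commutant of
  \<open>A \<inter> Mat(T)\<close> cannot be supported at a site whose l-neighbourhood lies in T.\<close>

lemma relative_commutant_local_in_boundary:
  assumes "finite T" and z: "z \<in> A" "local_in p T z"
    and comm: "\<And>w. w \<in> A \<Longrightarrow> local_in p T w \<Longrightarrow> op_mult z w = op_mult w z"
  shows "local_in p (thick_boundary T l) z"
proof (cases "z \<in> {fscale k (op_one p) | k. True}")
  case True
  then obtain k where "z = fscale k (op_one p)" by blast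
  then have "local_in p {} z" using local_in_scale[OF local_in_one_empty] by simp
  then show ?thesis using local_in_mono finite_thick_boundary[OF \<open>finite T\<close>] by blast
next
  case False
  have z_Mat: "z \<in> Mat p" using z mem_Mat_iff by blast
  have "Supp p z \<subseteq> thick_boundary T l"
  proof
    fix s assume s: "s \<in> Supp p z"
    have "s \<in> T" using Supp_minimal[OF z_Mat] z(2) s by blast
    have "\<exists>w\<in>A \<inter> Mat_loc p (thicken {s} l). op_mult z w \<noteq> op_mult w z"
      using noncentral_witness z(1) False s by blast
    then obtain w where w: "w \<in> A" "local_in p (thicken {s} l) w" "op_mult z w \<noteq> op_mult w z"
      by (auto simp: mem_Mat_loc_iff)
    have "\<not> thicken {s} l \<subseteq> T"
      using comm[OF w(1)] w(3) local_in_mono[OF w(2) _ \<open>finite T\<close>] by blast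
    then show "s \<in> thick_boundary T l" using \<open>s \<in> T\<close> by (simp add: thick_boundary_def)
  qed
  then show ?thesis
    using Supp_minimal[OF z_Mat] local_in_mono finite_thick_boundary[OF \<open>finite T\<close>] by blast
qed

definition expect :: "'d site set \<Rightarrow> 'd op \<Rightarrow> 'd op" where
  "expect S x = hs_proj p (thicken S l) (Mat_loc p S)
      (hs_proj p (thicken S l) (A \<inter> Mat_loc p (thicken S l)) x)"

lemma expect_zero:
  assumes "finite S"
  shows "expect S 0 = 0"
proof -
  have T: "finite (thicken S l)" "S \<subseteq> thicken S l" using assms by (simp_all add: finite_thicken subset_thicken)
  interpret C: cond_expectation p "thicken S l" "A \<inter> Mat_loc p (thicken S l)"
    by (rule cond_expectation_A_local[OF T(1)])
  interpret D: cond_expectation p "thicken S l" "Mat_loc p S" by (rule cond_expectation_Mat_loc[OF p_pos T])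
  show ?thesis by (simp add: expect_def C.P_zero D.P_zero)
qed

lemma expect_sum_mult_left:
  assumes S: "finite S" and "finite I"
    and a: "\<And>i. i \<in> I \<Longrightarrow> a i \<in> A" "\<And>i. i \<in> I \<Longrightarrow> local_in p S (a i)"
    and x: "\<And>i. i \<in> I \<Longrightarrow> local_in p (thicken S l) (x i)"
  shows "expect S (\<Sum>i\<in>I. op_mult (a i) (x i)) = (\<Sum>i\<in>I. op_mult (a i) (expect S (x i)))"
proof -
  let ?T = "thicken S l"
  have T: "finite ?T" "S \<subseteq> ?T" using S by (simp_all add: finite_thicken subset_thicken)
  interpret C: cond_expectation p ?T "A \<inter> Mat_loc p ?T" by (rule cond_expectation_A_local[OF T(1)])
  interpret D: cond_expectation p ?T "Mat_loc p S" by (rule cond_expectation_Mat_loc[OF p_pos T])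
  have aT: "local_in p ?T (a i)" if "i \<in> I" for i using a(2)[OF that] local_in_mono T by blast
  have "C.P (\<Sum>i\<in>I. op_mult (a i) (x i)) = (\<Sum>i\<in>I. op_mult (a i) (C.P (x i)))"
    using assms aT by (simp add: C.P_sum local_in_mult C.P_mult_left mem_Mat_loc_iff)
  moreover have "D.P (\<Sum>i\<in>I. op_mult (a i) (C.P (x i))) = (\<Sum>i\<in>I. op_mult (a i) (D.P (C.P (x i))))"
    using assms aT C.local_in_P by (simp add: D.P_sum local_in_mult D.P_mult_left mem_Mat_loc_iff)
  ultimately show ?thesis by (simp add: expect_def)
qed

text \<open>The first conditional expectation maps the commutant into the relative commutant of
  \<open>A \<inter> Mat(S\<^sup>+\<^sup>l)\<close>, hence (by VS) to operators supported away from S; the second one then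
  lands in the centre of Mat(S), i.e. in the scalars.\<close>

lemma expect_commutant_scalar:
  assumes S: "finite S" and y: "y \<in> B" "local_in p (thicken S l) y"
  obtains k where "expect S y = fscale k (op_one p)"
    "k * hs_inner p (thicken S l) (op_one p) (op_one p) = hs_inner p (thicken S l) y (op_one p)"
proof -
  let ?T = "thicken S l" and ?R = "thick_boundary (thicken S l) l"
  have T: "finite ?T" "S \<subseteq> ?T" using S by (simp_all add: finite_thicken subset_thicken)
  interpret C: cond_expectation p ?T "A \<inter> Mat_loc p ?T" by (rule cond_expectation_A_local[OF T(1)])
  interpret D: cond_expectation p ?T "Mat_loc p S" by (rule cond_expectation_Mat_loc[OF p_pos T])
  define z where "z = C.P y"
  have z: "z \<in> A" "local_in p ?T z" using C.P_mem[OF y(2)] by (auto simp: z_def mem_Mat_loc_iff)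
  have "local_in p ?R z"
  proof (rule relative_commutant_local_in_boundary[OF T(1) z])
    fix w assume "w \<in> A" "local_in p ?T w"
    then show "op_mult z w = op_mult w z"
      unfolding z_def using C.P_commute[OF y(2)] B_commute[OF _ y(1)] by (simp add: mem_Mat_loc_iff)
  qed
  then have "op_mult c z = op_mult z c" if "local_in p S c" for c
    using local_in_disjoint_commute[OF that] disjoint_thick_boundary_thicken by blast
  then have "op_mult (D.P z) c = op_mult c (D.P z)" if "local_in p S c" for c
    using D.P_commute[OF z(2)] that by (simp add: mem_Mat_loc_iff)
  then obtain k where k: "D.P z = fscale k (op_one p)"
    using local_in_central_scalar[OF p_pos] D.P_mem[OF z(2)] by (metis mem_Mat_loc_iff)
  have one: "op_one p \<in> A \<inter> Mat_loc p ?T" "op_one p \<in> Mat_loc p S"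
    using A_one local_in_one T S by (auto simp: mem_Mat_loc_iff)
  have "k * hs_inner p ?T (op_one p) (op_one p) = hs_inner p ?T (D.P z) (op_one p)"
    by (simp add: k hs_inner_scale_left)
  also have "\<dots> = hs_inner p ?T y (op_one p)"
    unfolding z_def using D.hs_inner_P_one C.hs_inner_P_one one y(2) C.local_in_P by simp
  finally have "k * hs_inner p ?T (op_one p) (op_one p) = hs_inner p ?T y (op_one p)" .
  moreover have "expect S y = fscale k (op_one p)" using k by (simp add: expect_def z_def)
  ultimately show ?thesis using that by blast
qed

lemma expect_mult_star_commutant:
  assumes S: "finite S" and v: "v \<in> B" "local_in p S v" and r: "r \<in> B" "local_in p S r"
  obtains k where "expect S (op_mult v (op_star r)) = fscale k (op_one p)"
    "k * hs_inner p (thicken S l) (op_one p) (op_one p) = hs_inner p (thicken S l) v r"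
proof -
  let ?T = "thicken S l"
  have T: "finite ?T" "S \<subseteq> ?T" using S by (simp_all add: finite_thicken subset_thicken)
  have vT: "local_in p ?T v" using local_in_mono[OF v(2) T(2,1)] .
  have "op_mult v (op_star r) \<in> B" "local_in p ?T (op_mult v (op_star r))"
    using v r local_in_mono[OF _ T(2,1)] by (auto intro: B_mult B_star local_in_mult local_in_star)
  then obtain k where "expect S (op_mult v (op_star r)) = fscale k (op_one p)"
      "k * hs_inner p ?T (op_one p) (op_one p) = hs_inner p ?T (op_mult v (op_star r)) (op_one p)"
    by (rule expect_commutant_scalar[OF S])
  moreover have "hs_inner p ?T (op_mult v (op_star r)) (op_one p) = hs_inner p ?T v r"
    by (simp add: hs_inner_mult_right[OF vT local_in_one[OF T(1)]] op_one_mult[OF r(2)])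
  ultimately show ?thesis using that[of k] by simp
qed

text \<open>Multiplying a relation \<open>\<Sum>\<^sub>v a\<^sub>v v = 0\<close> by \<open>r\<^sup>*\<close> and taking the expectation turns every
  v into the scalar \<open>\<langle>v, r\<rangle> / \<langle>1, 1\<rangle>\<close>.\<close>

lemma expect_relation_hs_inner:
  assumes S: "finite S" and V: "finite V" "V \<subseteq> B"
    and a: "\<And>v. v \<in> V \<Longrightarrow> a v \<in> A"
    and Sv: "\<And>v. v \<in> V \<Longrightarrow> local_in p S v" "\<And>v. v \<in> V \<Longrightarrow> local_in p S (a v)"
    and r: "r \<in> B" "local_in p S r"
    and sum_eq_0: "(\<Sum>v\<in>V. op_mult (a v) v) = 0"
  shows "(\<Sum>v\<in>V. fscale (hs_inner p (thicken S l) v r) (a v)) = 0"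
proof -
  let ?T = "thicken S l"
  let ?one = "hs_inner p ?T (op_one p) (op_one p)"
  have T: "finite ?T" "S \<subseteq> ?T" using S by (simp_all add: finite_thicken subset_thicken)
  have "\<exists>k. expect S (op_mult v (op_star r)) = fscale k (op_one p) \<and> k * ?one = hs_inner p ?T v r"
    if "v \<in> V" for v
    using expect_mult_star_commutant[OF S _ Sv(1)[OF that] r] V(2) that by blast
  then obtain k where k: "\<And>v. v \<in> V \<Longrightarrow> expect S (op_mult v (op_star r)) = fscale (k v) (op_one p)"
      and k_trace: "\<And>v. v \<in> V \<Longrightarrow> k v * ?one = hs_inner p ?T v r"
    by metis
  have "op_mult (\<Sum>v\<in>V. op_mult (a v) v) (op_star r) = (\<Sum>v\<in>V. op_mult (op_mult (a v) v) (op_star r))"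
    by (rule op_mult_sum_left[OF V(1) S]) (rule local_in_mult[OF Sv(2) Sv(1)])
  also have "\<dots> = (\<Sum>v\<in>V. op_mult (a v) (op_mult v (op_star r)))"
    by (intro sum.cong refl) (simp add: op_mult_assoc[OF Sv(2) Sv(1)])
  finally have "0 = expect S (\<Sum>v\<in>V. op_mult (a v) (op_mult v (op_star r)))"
    using sum_eq_0 expect_zero[OF S] by simp
  also have "\<dots> = (\<Sum>v\<in>V. fscale (k v) (a v))"
    using a Sv local_in_mono[OF _ T(2,1)] r(2)
    by (simp add: expect_sum_mult_left[OF S V(1)] local_in_mult local_in_star k
        op_mult_scale_right op_mult_one[OF Sv(2)])
  finally have sum_k: "(\<Sum>v\<in>V. fscale (k v) (a v)) = 0" ..
  have "(\<Sum>v\<in>V. fscale (hs_inner p ?T v r) (a v)) = (\<Sum>v\<in>V. fscale ?one (fscale (k v) (a v)))"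
    by (intro sum.cong refl) (simp add: k_trace[symmetric] cfun.scale_scale mult.commute)
  also have "\<dots> = fscale ?one (\<Sum>v\<in>V. fscale (k v) (a v))" by (rule cfun.scale_sum_right[symmetric])
  also have "\<dots> = 0" by (simp only: sum_k cfun.scale_zero_right)
  finally show ?thesis .
qed

lemma commutant_independent_coeffs_eq_0:
  assumes V: "finite V" "V \<subseteq> B" "cfun.independent V"
    and a: "\<And>v. v \<in> V \<Longrightarrow> a v \<in> A"
    and sum_eq_0: "(\<Sum>v\<in>V. op_mult (a v) v) = 0"
    and v0: "v0 \<in> V"
  shows "a v0 = 0"
proof -
  obtain S where S: "finite S" "\<And>x. x \<in> V \<union> a ` V \<Longrightarrow> local_in p S (id x)"
    by (rule Mat_common_local[of "V \<union> a ` V" id p]) (use V a A_Mat B_Mat in auto)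
  then have Sv: "local_in p S v" "local_in p S (a v)" if "v \<in> V" for v using that by auto
  let ?T = "thicken S l"
  have T: "finite ?T" "S \<subseteq> ?T" using S by (simp_all add: finite_thicken subset_thicken)
  obtain r where r: "r \<in> cfun.span V" "hs_inner p ?T v0 r \<noteq> 0"
      and r_dual: "\<And>v. v \<in> V - {v0} \<Longrightarrow> hs_inner p ?T v r = 0"
    by (rule hs_dual_vector[OF p_pos T(1) V(1) _ V(3) v0])
      (use Sv local_in_mono[OF _ T(2,1)] in \<open>auto simp: mem_Mat_loc_iff\<close>)
  have "V \<subseteq> Mat_loc p S" using Sv by (auto simp: mem_Mat_loc_iff)
  then have rS: "local_in p S r"
    using r(1) cfun.span_minimal[OF _ subspace_Mat_loc[OF S(1)]] by (blast intro: mem_Mat_loc_iff[THEN iffD1])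
  have rB: "r \<in> B" using r(1) cfun.span_minimal[OF V(2) B_subspace] by blast
  have "(\<Sum>v\<in>V. fscale (hs_inner p ?T v r) (a v)) = 0"
    by (rule expect_relation_hs_inner[OF S(1) V(1,2) a Sv rB rS sum_eq_0])
  moreover have "(\<Sum>v\<in>V. fscale (hs_inner p ?T v r) (a v)) = fscale (hs_inner p ?T v0 r) (a v0)"
    using r_dual V(1) v0 by (simp add: sum.remove sum.neutral)
  ultimately show ?thesis using r(2) by (metis cfun.scale_eq_0_iff)
qed

end

section \<open>The algebraic tensor product and the multiplication map\<close>

lemma cspan_eq: "cspan V = cfun.span V"
proof -
  have e: "(\<Sum>u\<in>F. fscale (c u) u) = (\<lambda>x. \<Sum>u\<in>F. c u * u x)" for F c
    by (simp add: fun_eq_iff sum_fun_apply fscale_apply)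
  show ?thesis unfolding cspan_def cfun.span_explicit
  proof (intro set_eqI iffI)
    fix v assume "v \<in> {v. \<exists>F c. finite F \<and> F \<subseteq> V \<and> v = (\<lambda>x. \<Sum>u\<in>F. c u * u x)}"
    then obtain F c where "finite F" "F \<subseteq> V" "v = (\<lambda>x. \<Sum>u\<in>F. c u * u x)" by blast
    moreover have "v = (\<Sum>a\<in>F. fscale (c a) a)" using e[of c F] \<open>v = _\<close> by simp
    ultimately show "v \<in> {\<Sum>a\<in>t. fscale (r a) a |t r. finite t \<and> t \<subseteq> V}" by blast
  next
    fix v assume "v \<in> {\<Sum>a\<in>t. fscale (r a) a |t r. finite t \<and> t \<subseteq> V}"
    then obtain F c where "finite F" "F \<subseteq> V" "v = (\<Sum>a\<in>F. fscale (c a) a)" by blast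
    then show "v \<in> {v. \<exists>F c. finite F \<and> F \<subseteq> V \<and> v = (\<lambda>x. \<Sum>u\<in>F. c u * u x)}" using e[of c F] by auto
  qed
qed

definition fsupp :: "('x \<Rightarrow> complex) \<Rightarrow> 'x set" where
  "fsupp c = {z. c z \<noteq> 0}"

definition free_mul :: "('d op \<times> 'd op \<Rightarrow> complex) \<Rightarrow> 'd op" where
  "free_mul c = (\<lambda>x. \<Sum>z\<in>{z. c z \<noteq> 0}. c z * op_mult (fst z) (snd z) x)"

lemma mulmap_eq_free_mul: "mulmap X = free_mul (rep X)"
  by (simp add: mulmap_def free_mul_def Let_def)

lemma free_mul_eq_sum:
  assumes "finite F" "fsupp c \<subseteq> F"
  shows "free_mul c = (\<Sum>z\<in>F. fscale (c z) (op_mult (fst z) (snd z)))"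
proof -
  have "free_mul c = (\<lambda>x. \<Sum>z\<in>F. c z * op_mult (fst z) (snd z) x)"
    unfolding free_mul_def using assms by (intro ext sum.mono_neutral_left) (auto simp: fsupp_def)
  then show ?thesis by (simp add: fun_eq_iff sum_fun_apply fscale_apply)
qed

lemma fsupp_add: "fsupp (c + d) \<subseteq> fsupp c \<union> fsupp d"
  by (auto simp: fsupp_def plus_fun_apply)

lemma fsupp_diff: "fsupp (c - d) \<subseteq> fsupp c \<union> fsupp d"
  by (auto simp: fsupp_def minus_apply)

lemma fsupp_scale: "fsupp (fscale k c) \<subseteq> fsupp c"
  by (auto simp: fsupp_def fscale_apply)

lemma fsupp_etens: "fsupp (etens a b) = {(a, b)}"
  by (auto simp: fsupp_def etens_def)

lemma fsupp_zero: "fsupp 0 = {}"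
  by (auto simp: fsupp_def zero_fun_apply)

lemma fsupp_sum: "fsupp (\<Sum>i\<in>I. f i) \<subseteq> (\<Union>i\<in>I. fsupp (f i))"
  by (auto simp: fsupp_def sum_fun_apply elim: sum.not_neutral_contains_not_neutral)

lemma free_mul_add:
  assumes "finite (fsupp c)" "finite (fsupp d)"
  shows "free_mul (c + d) = free_mul c + free_mul d"
proof -
  let ?F = "fsupp c \<union> fsupp d"
  have "free_mul (c + d) = (\<Sum>z\<in>?F. fscale ((c + d) z) (op_mult (fst z) (snd z)))"
    by (rule free_mul_eq_sum) (use assms fsupp_add[of c d] in auto)
  also have "\<dots> = (\<Sum>z\<in>?F. fscale (c z) (op_mult (fst z) (snd z))) + (\<Sum>z\<in>?F. fscale (d z) (op_mult (fst z) (snd z)))"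
    by (simp add: sum.distrib[symmetric] plus_fun_apply cfun.scale_left_distrib)
  also have "\<dots> = free_mul c + free_mul d" using assms free_mul_eq_sum[of ?F c] free_mul_eq_sum[of ?F d] by auto
  finally show ?thesis .
qed

lemma free_mul_diff:
  assumes "finite (fsupp c)" "finite (fsupp d)"
  shows "free_mul (c - d) = free_mul c - free_mul d"
proof -
  let ?F = "fsupp c \<union> fsupp d"
  have "free_mul (c - d) = (\<Sum>z\<in>?F. fscale ((c - d) z) (op_mult (fst z) (snd z)))"
    by (rule free_mul_eq_sum) (use assms fsupp_diff[of c d] in auto)
  also have "\<dots> = (\<Sum>z\<in>?F. fscale (c z) (op_mult (fst z) (snd z))) - (\<Sum>z\<in>?F. fscale (d z) (op_mult (fst z) (snd z)))"
    by (simp add: sum_subtractf[symmetric] minus_apply cfun.scale_left_diff_distrib)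
  also have "\<dots> = free_mul c - free_mul d" using assms free_mul_eq_sum[of ?F c] free_mul_eq_sum[of ?F d] by auto
  finally show ?thesis .
qed

lemma free_mul_scale:
  assumes "finite (fsupp c)"
  shows "free_mul (fscale k c) = fscale k (free_mul c)"
proof -
  have "free_mul (fscale k c) = (\<Sum>z\<in>fsupp c. fscale (fscale k c z) (op_mult (fst z) (snd z)))"
    by (rule free_mul_eq_sum) (use assms fsupp_scale[of k c] in auto)
  also have "\<dots> = fscale k (\<Sum>z\<in>fsupp c. fscale (c z) (op_mult (fst z) (snd z)))"
    by (simp add: cfun.scale_sum_right fscale_apply cfun.scale_scale)
  also have "\<dots> = fscale k (free_mul c)" using assms by (simp add: free_mul_eq_sum)
  finally show ?thesis .
qed

lemma free_mul_etens: "free_mul (etens a b) = op_mult a b"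
proof -
  have "free_mul (etens a b) = (\<Sum>z\<in>{(a,b)}. fscale (etens a b z) (op_mult (fst z) (snd z)))"
    by (rule free_mul_eq_sum) (auto simp: fsupp_etens)
  then show ?thesis by (simp add: etens_def fun_eq_iff fscale_apply)
qed

lemma free_mul_zero: "free_mul 0 = 0"
  by (simp add: free_mul_def zero_fun_apply fun_eq_iff)

lemma finite_fsupp_sum: "finite I \<Longrightarrow> (\<And>i. i \<in> I \<Longrightarrow> finite (fsupp (f i))) \<Longrightarrow> finite (fsupp (\<Sum>i\<in>I. f i))"
proof -
  assume "finite I" "\<And>i. i \<in> I \<Longrightarrow> finite (fsupp (f i))"
  then have "finite (\<Union>i\<in>I. fsupp (f i))" by blast
  then show ?thesis using fsupp_sum[of f I] by (rule finite_subset[rotated])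
qed

lemma free_mul_sum:
  assumes "finite I" "\<And>i. i \<in> I \<Longrightarrow> finite (fsupp (f i))"
  shows "free_mul (\<Sum>i\<in>I. f i) = (\<Sum>i\<in>I. free_mul (f i))"
  using assms
proof (induction I rule: finite_induct)
  case empty then show ?case by (simp add: free_mul_zero)
next
  case (insert x F)
  have "free_mul (\<Sum>i\<in>insert x F. f i) = free_mul (f x + (\<Sum>i\<in>F. f i))" using insert by simp
  also have "\<dots> = free_mul (f x) + free_mul (\<Sum>i\<in>F. f i)"
    using insert by (intro free_mul_add finite_fsupp_sum) auto
  finally show ?case using insert by simp
qed

lemma etens_expansion:
  assumes "finite (fsupp c)"
  shows "c = (\<Sum>z\<in>fsupp c. fscale (c z) (etens (fst z) (snd z)))"
proof (rule ext)
  fix w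
  have "(\<Sum>z\<in>fsupp c. fscale (c z) (etens (fst z) (snd z))) w = (\<Sum>z\<in>fsupp c. if z = w then c w else 0)"
    by (simp add: sum_fun_apply fscale_apply etens_def) (intro sum.cong refl, auto)
  also have "\<dots> = c w" using assms by (simp add: sum.delta' fsupp_def)
  finally show "c w = (\<Sum>z\<in>fsupp c. fscale (c z) (etens (fst z) (snd z))) w" by simp
qed

lemma finite_fsupp_diff: "finite (fsupp x1) \<Longrightarrow> finite (fsupp x2) \<Longrightarrow> finite (fsupp (x1 - x2))"
  using fsupp_diff[of x1 x2] finite_subset by blast

lemma finite_fsupp_add: "finite (fsupp x1) \<Longrightarrow> finite (fsupp x2) \<Longrightarrow> finite (fsupp (x1 + x2))"
  using fsupp_add[of x1 x2] finite_subset by blast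

lemma finite_fsupp_scale: "finite (fsupp x1) \<Longrightarrow> finite (fsupp (fscale k x1))"
  using fsupp_scale[of k x1] finite_subset by blast

lemma subspace_free_mul_kernel: "cfun.subspace {x. finite (fsupp x) \<and> free_mul x = 0}"
  by (auto simp: cfun.subspace_def fsupp_zero free_mul_zero finite_fsupp_add finite_fsupp_scale
      free_mul_add free_mul_scale cfun.scale_zero_right)

lemma free_iff: "c \<in> free A B \<longleftrightarrow> finite (fsupp c) \<and> fsupp c \<subseteq> A \<times> B"
  by (simp add: free_def fsupp_def)

lemma free_add: "c \<in> free A B \<Longrightarrow> d \<in> free A B \<Longrightarrow> c + d \<in> free A B"
  using fsupp_add[of c d] by (auto simp: free_iff finite_fsupp_add)

lemma free_diff: "c \<in> free A B \<Longrightarrow> d \<in> free A B \<Longrightarrow> c - d \<in> free A B"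
  using fsupp_diff[of c d] by (auto simp: free_iff finite_fsupp_diff)

lemma free_scale: "c \<in> free A B \<Longrightarrow> fscale k c \<in> free A B"
  using fsupp_scale[of k c] by (auto simp: free_iff finite_fsupp_scale)

lemma free_etens: "a \<in> A \<Longrightarrow> b \<in> B \<Longrightarrow> etens a b \<in> free A B"
  by (auto simp: free_iff fsupp_etens)

lemma free_zero: "0 \<in> free A B"
  by (auto simp: free_iff fsupp_zero)

lemma free_sum: "(\<And>i. i \<in> I \<Longrightarrow> f i \<in> free A B) \<Longrightarrow> (\<Sum>i\<in>I. f i) \<in> free A B"
  by (induction I rule: infinite_finite_induct) (auto simp: free_zero free_add)

lemma trel_subspace: "cfun.subspace (trel A B)"
  unfolding trel_def cspan_eq by simp

lemma trel_span: "trel A B = cfun.span (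
     {fsub (etens (fadd a a') b) (fadd (etens a b) (etens a' b)) | a a' b. a \<in> A \<and> a' \<in> A \<and> b \<in> B} \<union>
     {fsub (etens a (fadd b b')) (fadd (etens a b) (etens a b')) | a b b'. a \<in> A \<and> b \<in> B \<and> b' \<in> B} \<union>
     {fsub (etens (fscale k a) b) (fscale k (etens a b)) | k a b. a \<in> A \<and> b \<in> B} \<union>
     {fsub (etens a (fscale k b)) (fscale k (etens a b)) | k a b. a \<in> A \<and> b \<in> B})"
  unfolding trel_def cspan_eq ..

lemma trel_add_left: "a \<in> A \<Longrightarrow> a' \<in> A \<Longrightarrow> b \<in> B \<Longrightarrow> etens (a + a') b - (etens a b + etens a' b) \<in> trel A B"
  unfolding trel_span by (rule cfun.span_base) (auto simp: fsub_eq fadd_eq)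

lemma trel_add_right: "a \<in> A \<Longrightarrow> b \<in> B \<Longrightarrow> b' \<in> B \<Longrightarrow> etens a (b + b') - (etens a b + etens a b') \<in> trel A B"
  unfolding trel_span by (rule cfun.span_base) (auto simp: fsub_eq fadd_eq)

lemma trel_scale_left: "a \<in> A \<Longrightarrow> b \<in> B \<Longrightarrow> etens (fscale k a) b - fscale k (etens a b) \<in> trel A B"
  unfolding trel_span by (rule cfun.span_base) (auto simp: fsub_eq)

lemma trel_scale_right: "a \<in> A \<Longrightarrow> b \<in> B \<Longrightarrow> etens a (fscale k b) - fscale k (etens a b) \<in> trel A B"
  unfolding trel_span by (rule cfun.span_base) (auto simp: fsub_eq)

lemma trel_add: "x \<in> trel A B \<Longrightarrow> y \<in> trel A B \<Longrightarrow> x + y \<in> trel A B"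
  using trel_subspace cfun.subspace_add by blast

lemma trel_diff: "x \<in> trel A B \<Longrightarrow> y \<in> trel A B \<Longrightarrow> x - y \<in> trel A B"
  using trel_subspace cfun.subspace_diff by blast

lemma trel_scale: "x \<in> trel A B \<Longrightarrow> fscale k x \<in> trel A B"
  using trel_subspace cfun.subspace_scale by blast

lemma trel_zero: "0 \<in> trel A B"
  using trel_subspace cfun.subspace_0 by blast

lemma trel_sum: "(\<And>i. i \<in> I \<Longrightarrow> f i \<in> trel A B) \<Longrightarrow> (\<Sum>i\<in>I. f i) \<in> trel A B"
  using trel_subspace cfun.subspace_sum by blast

lemma fconv_expand:
  "fconv c d = (\<Sum>q\<in>fsupp c \<times> fsupp d. fscale (c (fst q) * d (snd q))
      (etens (op_mult (fst (fst q)) (fst (snd q))) (op_mult (snd (fst q)) (snd (snd q)))))"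
proof (rule ext)
  fix z
  show "fconv c d z = (\<Sum>q\<in>fsupp c \<times> fsupp d. fscale (c (fst q) * d (snd q))
      (etens (op_mult (fst (fst q)) (fst (snd q))) (op_mult (snd (fst q)) (snd (snd q))))) z"
    unfolding fconv_def sum_fun_apply fscale_apply etens_def fsupp_def
    by (intro sum.cong refl) (auto simp: case_prod_beta)
qed

lemma fstar_expand:
  "fstar c = (\<Sum>x\<in>fsupp c. fscale (cnj (c x)) (etens (op_star (fst x)) (op_star (snd x))))"
proof (rule ext)
  fix z
  show "fstar c z = (\<Sum>x\<in>fsupp c. fscale (cnj (c x)) (etens (op_star (fst x)) (op_star (snd x)))) z"
    unfolding fstar_def sum_fun_apply fscale_apply etens_def fsupp_def
    by (intro sum.cong refl) auto
qed

lemma op_mult_sum_scale: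
  assumes "finite I" "finite S" "\<And>i. i \<in> I \<Longrightarrow> local_in p S (f i)"
  shows "op_mult (\<Sum>i\<in>I. fscale (c i) (f i)) (\<Sum>j\<in>J. fscale (d j) (g j)) =
    (\<Sum>i\<in>I. \<Sum>j\<in>J. fscale (c i * d j) (op_mult (f i) (g j)))"
proof -
  have "op_mult (\<Sum>i\<in>I. fscale (c i) (f i)) (\<Sum>j\<in>J. fscale (d j) (g j)) =
      (\<Sum>i\<in>I. op_mult (fscale (c i) (f i)) (\<Sum>j\<in>J. fscale (d j) (g j)))"
    by (rule op_mult_sum_left[OF assms(1,2)]) (rule local_in_scale[OF assms(3)])
  also have "\<dots> = (\<Sum>i\<in>I. \<Sum>j\<in>J. fscale (c i * d j) (op_mult (f i) (g j)))"
    by (intro sum.cong refl) (simp add: op_mult_scale_left[OF assms(3)] op_mult_sum_right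
        op_mult_scale_right cfun.scale_sum_right cfun.scale_scale mult.commute)
  finally show ?thesis .
qed

context commutant_pair
begin

lemma etens_zero_right_trel: "a \<in> A \<Longrightarrow> etens a 0 \<in> trel A B"
  using trel_scale_right[OF _ B_one, where k=0] by simp

lemma etens_zero_left_trel: "b \<in> B \<Longrightarrow> etens 0 b \<in> trel A B"
  using trel_scale_left[OF A_one, where k=0] by simp

lemma etens_sum_right_trel:
  assumes a: "a \<in> A" and fI: "finite I" and v: "\<And>i. i \<in> I \<Longrightarrow> v i \<in> B"
  shows "etens a (\<Sum>i\<in>I. fscale (u i) (v i)) - (\<Sum>i\<in>I. fscale (u i) (etens a (v i))) \<in> trel A B"
  using fI v
proof (induction I rule: finite_induct)
  case empty then show ?case using etens_zero_right_trel[OF a] by simp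
next
  case (insert i F)
  let ?r = "\<Sum>j\<in>F. fscale (u j) (v j)"
  let ?r' = "\<Sum>j\<in>F. fscale (u j) (etens a (v j))"
  have vi: "fscale (u i) (v i) \<in> B" using insert cfun.subspace_scale[OF B_subspace] by auto
  have rB: "?r \<in> B" using insert by (intro B_sum cfun.subspace_scale[OF B_subspace]) auto
  have "etens a (\<Sum>j\<in>insert i F. fscale (u j) (v j)) - (\<Sum>j\<in>insert i F. fscale (u j) (etens a (v j))) =
     (etens a (fscale (u i) (v i) + ?r) - (etens a (fscale (u i) (v i)) + etens a ?r))
     + (etens a (fscale (u i) (v i)) - fscale (u i) (etens a (v i)))
     + (etens a ?r - ?r')"
    using insert by (simp add: algebra_simps)
  also have "\<dots> \<in> trel A B"
    using trel_add_right[OF a vi rB] trel_scale_right[OF a, where b="v i" and k="u i"] insert by (intro trel_add) auto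
  finally show ?case .
qed

lemma etens_sum_left_trel:
  assumes b: "b \<in> B" and fI: "finite I" and a: "\<And>i. i \<in> I \<Longrightarrow> a i \<in> A"
  shows "etens (\<Sum>i\<in>I. fscale (u i) (a i)) b - (\<Sum>i\<in>I. fscale (u i) (etens (a i) b)) \<in> trel A B"
  using fI a
proof (induction I rule: finite_induct)
  case empty then show ?case using etens_zero_left_trel[OF b] by simp
next
  case (insert i F)
  let ?r = "\<Sum>j\<in>F. fscale (u j) (a j)"
  let ?r' = "\<Sum>j\<in>F. fscale (u j) (etens (a j) b)"
  have ai: "fscale (u i) (a i) \<in> A" using insert A_scale by auto
  have rA: "?r \<in> A" using insert by (intro A_sum A_scale) auto
  have "etens (\<Sum>j\<in>insert i F. fscale (u j) (a j)) b - (\<Sum>j\<in>insert i F. fscale (u j) (etens (a j) b)) =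
     (etens (fscale (u i) (a i) + ?r) b - (etens (fscale (u i) (a i)) b + etens ?r b))
     + (etens (fscale (u i) (a i)) b - fscale (u i) (etens (a i) b))
     + (etens ?r b - ?r')"
    using insert by (simp add: algebra_simps)
  also have "\<dots> \<in> trel A B"
    using trel_add_left[OF ai rA b] trel_scale_left[OF _ b, where a="a i" and k="u i"] b insert by (intro trel_add) auto
  finally show ?case .
qed

lemma op_mult_add_left_A: "a \<in> A \<Longrightarrow> a' \<in> A \<Longrightarrow> op_mult (a + a') b = op_mult a b + op_mult a' b"
  using A_Mat Mat_common_local2 op_mult_add_left by metis

lemma op_mult_scale_left_A: "a \<in> A \<Longrightarrow> op_mult (fscale k a) b = fscale k (op_mult a b)"
  using A_Mat mem_Mat_iff op_mult_scale_left by metis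

lemma trel_subset_free_mul_kernel: "trel A B \<subseteq> {x. finite (fsupp x) \<and> free_mul x = 0}"
  unfolding trel_span
  by (rule cfun.span_minimal[OF _ subspace_free_mul_kernel])
    (auto simp: fsub_eq fadd_eq fsupp_etens finite_fsupp_diff finite_fsupp_add finite_fsupp_scale
      free_mul_diff free_mul_add free_mul_scale free_mul_etens op_mult_add_left_A op_mult_add_right
      op_mult_scale_left_A op_mult_scale_right)

lemma free_mul_eq_if_trel: "c \<in> free A B \<Longrightarrow> c' \<in> free A B \<Longrightarrow> c - c' \<in> trel A B \<Longrightarrow> free_mul c = free_mul c'"
  using trel_subset_free_mul_kernel free_mul_diff[of c c'] by (auto simp: free_iff)

lemma tclass_self: "c \<in> free A B \<Longrightarrow> c \<in> tclass A B c"
  by (simp add: tclass_def trel_zero fsub_eq)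

lemma rep_tclass: "c \<in> free A B \<Longrightarrow> rep (tclass A B c) \<in> tclass A B c"
  unfolding rep_def by (rule someI[of "\<lambda>c'. c' \<in> tclass A B c" c]) (rule tclass_self)

lemma mulmap_tclass: "c \<in> free A B \<Longrightarrow> mulmap (tclass A B c) = free_mul c"
proof -
  assume c: "c \<in> free A B"
  have r: "rep (tclass A B c) \<in> free A B" "c - rep (tclass A B c) \<in> trel A B"
    using rep_tclass[OF c] by (auto simp: tclass_def fsub_eq)
  show ?thesis using free_mul_eq_if_trel[OF c r(1) r(2)] by (simp add: mulmap_eq_free_mul)
qed

lemma tensor_rep: "X \<in> tensor A B \<Longrightarrow> rep X \<in> free A B"
  unfolding tensor_def using rep_tclass by (auto simp: tclass_def)

lemma free_mul_free:
  assumes c: "c \<in> free A B"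
  shows "free_mul c = (\<Sum>x\<in>fsupp c. fscale (c x) (op_mult (fst x) (snd x)))"
  using c by (intro free_mul_eq_sum) (auto simp: free_iff)

lemma fconv_free:
  assumes c: "c \<in> free A B" and d: "d \<in> free A B"
  shows "fconv c d \<in> free A B"
  unfolding fconv_expand
  using c d by (intro free_sum free_scale free_etens A_mult B_mult) (auto simp: free_iff)

lemma fstar_free:
  assumes c: "c \<in> free A B"
  shows "fstar c \<in> free A B"
  unfolding fstar_expand
  using c by (intro free_sum free_scale free_etens A_star B_star) (auto simp: free_iff)

lemma free_mul_fconv:
  assumes c: "c \<in> free A B" and d: "d \<in> free A B"
  shows "free_mul (fconv c d) = op_mult (free_mul c) (free_mul d)"
proof -
  let ?Sc = "fsupp c" and ?Sd = "fsupp d"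
  have fc: "finite ?Sc" "?Sc \<subseteq> A \<times> B" and fd: "finite ?Sd" "?Sd \<subseteq> A \<times> B"
    using c d by (auto simp: free_iff)
  let ?P = "\<lambda>x. op_mult (fst x) (snd x)"
  have "free_mul (fconv c d) = (\<Sum>q\<in>?Sc \<times> ?Sd. fscale (c (fst q) * d (snd q))
      (op_mult (op_mult (fst (fst q)) (fst (snd q))) (op_mult (snd (fst q)) (snd (snd q)))))"
    unfolding fconv_expand
    using fc fd by (subst free_mul_sum) (auto simp: finite_fsupp_scale fsupp_etens free_mul_scale free_mul_etens)
  also have "\<dots> = (\<Sum>q\<in>?Sc \<times> ?Sd. fscale (c (fst q) * d (snd q)) (op_mult (?P (fst q)) (?P (snd q))))"
  proof (intro sum.cong refl)
    fix q assume q: "q \<in> ?Sc \<times> ?Sd"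
    then have "fst (fst q) \<in> A" "snd (fst q) \<in> B" "fst (snd q) \<in> A" "snd (snd q) \<in> B" using fc fd by auto
    then show "fscale (c (fst q) * d (snd q))
      (op_mult (op_mult (fst (fst q)) (fst (snd q))) (op_mult (snd (fst q)) (snd (snd q)))) =
      fscale (c (fst q) * d (snd q)) (op_mult (?P (fst q)) (?P (snd q)))"
      using op_mult_interchange by simp
  qed
  also have "\<dots> = (\<Sum>x\<in>?Sc. \<Sum>y\<in>?Sd. fscale (c x * d y) (op_mult (?P x) (?P y)))"
    by (simp add: sum.cartesian_product case_prod_beta)
  also have "\<dots> = op_mult (\<Sum>x\<in>?Sc. fscale (c x) (?P x)) (\<Sum>y\<in>?Sd. fscale (d y) (?P y))"
  proof -
    obtain S where S: "finite S" "\<And>i. i \<in> fst ` ?Sc \<union> snd ` ?Sc \<Longrightarrow> local_in p S (id i)"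
      by (rule Mat_common_local[of "fst ` ?Sc \<union> snd ` ?Sc" id p]) (use fc A_Mat B_Mat in auto)
    then have lP: "local_in p S (?P x)" if "x \<in> ?Sc" for x
      using that by (auto intro!: local_in_mult)
    show ?thesis by (rule op_mult_sum_scale[OF fc(1) S(1) lP, symmetric])
  qed
  also have "\<dots> = op_mult (free_mul c) (free_mul d)" by (simp add: free_mul_free[OF c] free_mul_free[OF d])
  finally show ?thesis .
qed

lemma free_mul_fstar:
  assumes c: "c \<in> free A B"
  shows "free_mul (fstar c) = op_star (free_mul c)"
proof -
  have fc: "finite (fsupp c)" "fsupp c \<subseteq> A \<times> B" using c by (auto simp: free_iff)
  have "free_mul (fstar c) = (\<Sum>x\<in>fsupp c. fscale (cnj (c x)) (op_mult (op_star (fst x)) (op_star (snd x))))"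
    unfolding fstar_expand
    using fc by (subst free_mul_sum) (auto simp: finite_fsupp_scale fsupp_etens free_mul_scale free_mul_etens)
  also have "\<dots> = (\<Sum>x\<in>fsupp c. fscale (cnj (c x)) (op_star (op_mult (fst x) (snd x))))"
    using fc by (intro sum.cong refl) (auto simp: op_star_mult_commute)
  also have "\<dots> = op_star (free_mul c)" by (simp add: free_mul_free[OF c] op_star_sum op_star_scale)
  finally show ?thesis .
qed

end

context commutant_pair
begin

text \<open>Every element of the free space is congruent modulo the bilinearity relations to
  \<open>\<Sum>\<^sub>v a\<^sub>v \<otimes> v\<close> with the v linearly independent: expand the second factors in a basis of
  their span and collect coefficients in the first factor.\<close>

lemma free_congruent_independent:
  assumes e: "e \<in> free A B"
  obtains V a where "finite V" "V \<subseteq> B" "cfun.independent V" "\<And>v. v \<in> V \<Longrightarrow> a v \<in> A"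
    "e - (\<Sum>v\<in>V. etens (a v) v) \<in> trel A B"
proof -
  let ?Z = "fsupp e"
  have fZ: "finite ?Z" "?Z \<subseteq> A \<times> B" using e by (auto simp: free_iff)
  obtain V where V: "V \<subseteq> snd ` ?Z" "cfun.independent V" "snd ` ?Z \<subseteq> cfun.span V"
    using cfun.maximal_independent_subset[of "snd ` ?Z"] by blast
  have fV: "finite V" using V(1) fZ(1) finite_subset by blast
  have "snd ` ?Z \<subseteq> B" using fZ(2) by auto
  then have VB: "V \<subseteq> B" using V(1) by blast
  have "\<forall>b\<in>snd ` ?Z. \<exists>u. b = (\<Sum>v\<in>V. fscale (u v) v)"
  proof
    fix b assume "b \<in> snd ` ?Z"
    then have "b \<in> range (\<lambda>u. \<Sum>v\<in>V. fscale (u v) v)" using V(3) cfun.span_finite[OF fV] by blast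
    then show "\<exists>u. b = (\<Sum>v\<in>V. fscale (u v) v)" by blast
  qed
  from bchoice[OF this] obtain coef where "\<forall>b\<in>snd ` ?Z. b = (\<Sum>v\<in>V. fscale (coef b v) v)"
    by blast
  then have coef: "b = (\<Sum>v\<in>V. fscale (coef b v) v)" if "b \<in> snd ` ?Z" for b
    using that by blast
  define e2 where "e2 = (\<Sum>z\<in>?Z. fscale (e z) (\<Sum>v\<in>V. fscale (coef (snd z) v) (etens (fst z) v)))"
  define a where "a v = (\<Sum>z\<in>?Z. fscale (e z * coef (snd z) v) (fst z))" for v
  have aA: "a v \<in> A" for v unfolding a_def using fZ by (intro A_sum A_scale) auto
  have "e - e2 = (\<Sum>z\<in>?Z. fscale (e z) (etens (fst z) (snd z) -
      (\<Sum>v\<in>V. fscale (coef (snd z) v) (etens (fst z) v))))"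
    by (subst etens_expansion[OF fZ(1)]) (simp add: e2_def sum_subtractf cfun.scale_right_diff_distrib)
  also have "\<dots> \<in> trel A B"
  proof (intro trel_sum trel_scale)
    fix z assume z: "z \<in> ?Z"
    then have "fst z \<in> A" "snd z \<in> snd ` ?Z" using fZ(2) by (auto simp: mem_Times_iff)
    have "etens (fst z) (\<Sum>v\<in>V. fscale (coef (snd z) v) (id v))
        - (\<Sum>v\<in>V. fscale (coef (snd z) v) (etens (fst z) (id v))) \<in> trel A B"
      by (rule etens_sum_right_trel[OF \<open>fst z \<in> A\<close> fV]) (use VB in auto)
    then show "etens (fst z) (snd z) - (\<Sum>v\<in>V. fscale (coef (snd z) v) (etens (fst z) v)) \<in> trel A B"
      using coef[OF \<open>snd z \<in> snd ` ?Z\<close>] by simp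
  qed
  finally have e_e2: "e - e2 \<in> trel A B" .
  have "(\<Sum>v\<in>V. etens (a v) v) - e2 =
      (\<Sum>v\<in>V. etens (a v) v - (\<Sum>z\<in>?Z. fscale (e z * coef (snd z) v) (etens (fst z) v)))"
    unfolding e2_def
    by (simp add: cfun.scale_sum_right cfun.scale_scale sum_subtractf) (subst sum.swap, rule refl)
  also have "\<dots> \<in> trel A B"
    unfolding a_def using VB fZ by (intro trel_sum etens_sum_left_trel) (auto simp: mem_Times_iff)
  finally have "(e - e2) - ((\<Sum>v\<in>V. etens (a v) v) - e2) \<in> trel A B"
    by (rule trel_diff[OF e_e2])
  then show ?thesis using that[OF fV VB V(2) aA] by simp
qed

lemma mulmap_image: "mulmap ` tensor A B = prodspan A B"
proof
  show "mulmap ` tensor A B \<subseteq> prodspan A B"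
  proof
    fix v assume "v \<in> mulmap ` tensor A B"
    then obtain c where c: "c \<in> free A B" "v = mulmap (tclass A B c)" by (auto simp: tensor_def)
    have fc: "finite (fsupp c)" "fsupp c \<subseteq> A \<times> B" using c by (auto simp: free_iff)
    have "v = (\<Sum>x\<in>fsupp c. fscale (c x) (op_mult (fst x) (snd x)))"
      using c by (simp add: mulmap_tclass free_mul_free)
    also have "\<dots> \<in> cfun.span {op_mult a b | a b. a \<in> A \<and> b \<in> B}"
      using fc by (intro cfun.span_sum cfun.span_scale cfun.span_base) force
    finally show "v \<in> prodspan A B" by (simp add: prodspan_def cspan_eq)
  qed
next
  show "prodspan A B \<subseteq> mulmap ` tensor A B"
  proof
    fix v assume "v \<in> prodspan A B"
    then obtain t r where t: "finite t" "t \<subseteq> {op_mult a b | a b. a \<in> A \<and> b \<in> B}"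
        and v: "v = (\<Sum>u\<in>t. fscale (r u) u)"
      unfolding prodspan_def cspan_eq cfun.span_explicit by blast
    have "\<forall>u\<in>t. \<exists>g. fst g \<in> A \<and> snd g \<in> B \<and> u = op_mult (fst g) (snd g)" using t(2) by fastforce
    then obtain g where g: "\<And>u. u \<in> t \<Longrightarrow> fst (g u) \<in> A \<and> snd (g u) \<in> B \<and> u = op_mult (fst (g u)) (snd (g u))"
      by metis
    define c where "c = (\<Sum>u\<in>t. fscale (r u) (etens (fst (g u)) (snd (g u))))"
    have c: "c \<in> free A B" unfolding c_def using g by (intro free_sum free_scale free_etens) auto
    have "free_mul c = (\<Sum>u\<in>t. fscale (r u) (op_mult (fst (g u)) (snd (g u))))"
      unfolding c_def
      by (subst free_mul_sum[OF t(1)]) (auto simp: finite_fsupp_scale fsupp_etens free_mul_scale free_mul_etens)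
    also have "\<dots> = v" unfolding v using g by (intro sum.cong refl) auto
    finally have "mulmap (tclass A B c) = v" using c by (simp add: mulmap_tclass)
    moreover have "tclass A B c \<in> tensor A B" using c by (simp add: tensor_def)
    ultimately show "v \<in> mulmap ` tensor A B" by blast
  qed
qed

lemma mulmap_tadd:
  assumes "X \<in> tensor A B" "Y \<in> tensor A B"
  shows "mulmap (tadd A B X Y) = fadd (mulmap X) (mulmap Y)"
  using tensor_rep[OF assms(1)] tensor_rep[OF assms(2)]
  unfolding tadd_def fadd_eq mulmap_tclass[OF free_add[OF tensor_rep[OF assms(1)] tensor_rep[OF assms(2)]]]
  by (simp add: free_mul_add free_iff mulmap_eq_free_mul)

lemma mulmap_tscale:
  assumes "X \<in> tensor A B"
  shows "mulmap (tscale A B k X) = fscale k (mulmap X)"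
  using tensor_rep[OF assms]
  unfolding tscale_def mulmap_tclass[OF free_scale[OF tensor_rep[OF assms]]]
  by (simp add: free_mul_scale free_iff mulmap_eq_free_mul)

lemma mulmap_tmult:
  assumes "X \<in> tensor A B" "Y \<in> tensor A B"
  shows "mulmap (tmult A B X Y) = op_mult (mulmap X) (mulmap Y)"
  unfolding tmult_def mulmap_tclass[OF fconv_free[OF tensor_rep[OF assms(1)] tensor_rep[OF assms(2)]]]
  using tensor_rep[OF assms(1)] tensor_rep[OF assms(2)] by (simp add: free_mul_fconv mulmap_eq_free_mul)

lemma mulmap_tstar:
  assumes "X \<in> tensor A B"
  shows "mulmap (tstar A B X) = op_star (mulmap X)"
  unfolding tstar_def mulmap_tclass[OF fstar_free[OF tensor_rep[OF assms]]]
  using tensor_rep[OF assms] by (simp add: free_mul_fstar mulmap_eq_free_mul)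

lemma mulmap_tone: "mulmap (tone p A B) = op_one p"
  using free_etens[OF A_one B_one]
  by (simp add: tone_def mulmap_tclass free_mul_etens op_one_mult[OF local_in_one_empty])

end

context vs_commutant_pair
begin

lemma trel_if_free_mul_eq_0:
  assumes e: "e \<in> free A B" and "free_mul e = 0"
  shows "e \<in> trel A B"
proof -
  obtain V a where V: "finite V" "V \<subseteq> B" "cfun.independent V" and a: "\<And>v. v \<in> V \<Longrightarrow> a v \<in> A"
    and e_V: "e - (\<Sum>v\<in>V. etens (a v) v) \<in> trel A B"
    by (rule free_congruent_independent[OF e]) auto
  have free_V: "(\<Sum>v\<in>V. etens (a v) v) \<in> free A B"
    using V(2) a by (intro free_sum free_etens) auto
  have "(\<Sum>v\<in>V. op_mult (a v) v) = free_mul (\<Sum>v\<in>V. etens (a v) v)"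
    by (subst free_mul_sum[OF V(1)]) (auto simp: fsupp_etens free_mul_etens)
  also have "\<dots> = 0"
    using free_mul_eq_if_trel[OF e free_V e_V] \<open>free_mul e = 0\<close> by simp
  finally have sum_eq_0: "(\<Sum>v\<in>V. op_mult (a v) v) = 0" .
  have "a v = 0" if "v \<in> V" for v
    by (rule commutant_independent_coeffs_eq_0[where a=a, OF V a sum_eq_0 that])
  then have "(\<Sum>v\<in>V. etens (a v) v) \<in> trel A B"
    using V(2) by (intro trel_sum) (auto intro: etens_zero_left_trel)
  from trel_add[OF e_V this] show ?thesis by simp
qed

lemma inj_on_mulmap: "inj_on mulmap (tensor A B)"
proof (rule inj_onI)
  fix X Y assume "X \<in> tensor A B" "Y \<in> tensor A B" and eq: "mulmap X = mulmap Y"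
  then obtain c d where c: "c \<in> free A B" "X = tclass A B c" and d: "d \<in> free A B" "Y = tclass A B d"
    by (auto simp: tensor_def)
  have "free_mul (c - d) = 0" using eq c d by (simp add: mulmap_tclass free_mul_diff free_iff)
  then have cd: "c - d \<in> trel A B" by (intro trel_if_free_mul_eq_0 free_diff c d)
  have "c - c' \<in> trel A B \<longleftrightarrow> d - c' \<in> trel A B" for c'
    using trel_diff[OF _ cd, of "c - c'"] trel_add[OF _ cd, of "d - c'"] by auto
  then show "X = Y" using c d by (auto simp: tclass_def fsub_eq)
qed

end

theorem lemma2p4:
  fixes p :: "'d::finite site \<Rightarrow> nat" and A B :: "'d op set"
  assumes "\<forall>s. 0 < p s"
    and "unital_star_subalg p A"
    and "VS p A"
    and "B = commutant p A"
  shows "bij_betw mulmap (tensor A B) (prodspan A B)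
    \<and> (\<forall>X\<in>tensor A B. \<forall>Y\<in>tensor A B. mulmap (tadd A B X Y) = fadd (mulmap X) (mulmap Y))
    \<and> (\<forall>k. \<forall>X\<in>tensor A B. mulmap (tscale A B k X) = fscale k (mulmap X))
    \<and> (\<forall>X\<in>tensor A B. \<forall>Y\<in>tensor A B. mulmap (tmult A B X Y) = op_mult (mulmap X) (mulmap Y))
    \<and> (\<forall>X\<in>tensor A B. mulmap (tstar A B X) = op_star (mulmap X))
    \<and> mulmap (tone p A B) = op_one p"
proof -
  obtain l where "\<forall>a\<in>A. a \<notin> {fscale k (op_one p) | k. True} \<longrightarrow>
      (\<forall>s\<in>Supp p a. \<exists>w\<in>A \<inter> Mat_loc p (thicken {s} l). op_mult a w \<noteq> op_mult w a)"
    using \<open>VS p A\<close> unfolding VS_def by blast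
  then interpret vs_commutant_pair p A B l
    using assms by unfold_locales
  show ?thesis
  proof (intro conjI ballI allI)
    show "bij_betw mulmap (tensor A B) (prodspan A B)"
      unfolding bij_betw_def using inj_on_mulmap mulmap_image by blast
    show "mulmap (tone p A B) = op_one p" by (rule mulmap_tone)
    fix X Y assume "X \<in> tensor A B" "Y \<in> tensor A B"
    then show "mulmap (tadd A B X Y) = fadd (mulmap X) (mulmap Y)"
      and "mulmap (tmult A B X Y) = op_mult (mulmap X) (mulmap Y)"
      by (rule mulmap_tadd, rule mulmap_tmult)
  next
    fix k X assume "X \<in> tensor A B"
    then show "mulmap (tscale A B k X) = fscale k (mulmap X)" and "mulmap (tstar A B X) = op_star (mulmap X)"
      by (rule mulmap_tscale, rule mulmap_tstar)
  qed
qed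

end
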